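(* Let $\bm{\mu}\in X^{\mathcal{L}(\mathcal{T})}$ be the true vector of leaf means and assume $V_{s_0}(\bm{\mu})\neq\theta$. Consider any algorithm that uses the GLR stopping rule $\tau_\delta=\inf\{t\in\mathbb{N}:Z_{s_0}(t)\ge\beta(t,\delta)\}$ and any sampling rule which ensures that, for every leaf $\ell\in\mathcal{L}(\mathcal{T})$, $N_\ell(t)/t\to w^{s_0}_\ell(\bm{\mu})$ almost surely as $t\to\infty$. Then for all $\delta\in(0,1)$, $\mathbb{P}(\tau_\delta<+\infty)=1$, and \[\mathbb{P}_{\bm{\mu}}\Big(\limsup_{\delta\to 0}\frac{\tau_\delta}{\log(1/\delta)}\le\frac{1}{d_{s_0}(\bm{\mu})}\Big)=1.\]
   Context: Tree: finite rooted tree $\mathcal{T}$, node set $S$, root $s_0$, children $\mathcal{C}(s)$, leaves $\mathcal{L}(\mathcal{T})$, $\mathcal{D}(s)$ leaves descending from $s$; internal labels $L(s)\in\{\text{MAX},\text{MIN}\}$. $X\subseteq\mathbb{R}$ mean-parameter set of a one-parameter exponential family; $d(x,y)$ the KL divergence between members with means $x,y$; threshold $\theta\in X$. $V_s(\bm{\lambda})=\lambda_s$ at leaves, max/min of children's values at MAX/MIN nodes; $a_s(\bm{\lambda})=$'win' iff $V_s(\bm{\lambda})\ge\theta$. Recursive weights at $\bm{\mu}$: $a^*=a_{s_0}(\bm{\mu})$; $P=$MAX, $Q=$MIN if $a^*=$'win', swapped if 'lose'. Leaf $s$: $w^s_s=1$, $d_s=d(\mu_s,\theta)$ if ($a^*=$'win',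 $\mu_s\ge\theta$) or ($a^*=$'lose', $\mu_s<\theta$), else $0$. $L(s)=P$: $d_s=\max_c d_c$, fix $c^*(s)\in\arg\max_c d_c$, if $d_s>0$ then $w^s_\ell=w^{c^*(s)}_\ell$ on $\mathcal{D}(c^*(s))$ and $0$ on the other children's leaves. $L(s)=Q$, all $d_c>0$: $d_s=(\sum_c 1/d_c)^{-1}$, $w^s_\ell=\frac{w^c_\ell/d_c}{\sum_{c'}1/d_{c'}}$ for $\ell\in\mathcal{D}(c)$. $L(s)=Q$ otherwise: $d_s=0$. Internal $s$ with $d_s=0$: $\bm{w}^s$ an arbitrary probability vector on $\mathcal{D}(s)$. Sampling model: at each round $t$ a leaf $I(t)$ is chosen and an independent reward drawn from its distribution (mean $\mu_{I(t)}$); $N_\ell(t)$ counts, $\hat\mu_\ell(t)$ empirical means. $Z_{s_0}(t)=\inf_{\bm{\lambda}\in X^{\mathcal{L}(\mathcal{T})}:a_{s_0}(\bm{\lambda})\neq a_{s_0}(\hat{\bm{\mu}}(t))}\sum_\ell N_\ell(t)d(\hat\mu_\ell(t),\lambda_\ell)$. Threshold: $h(x)=x-\ln x$, $h^{-1}:[1,\infty)\to[1,\infty)$ its inverse on $[1,\infty)$; $\tilde h(x)=e^{1/h^{-1}(x)}h^{-1}(x)$ if $x\ge h(1/\ln(3/2))$, else $\frac32(x-\ln\ln\frac32)$; $\mathcal{C}_{\exp}(x)=2\tilde h\big(\frac{h^{-1}(1+x)+\ln(\pi^2/3)}{2}\big)$; $\beta(t,\delta)=3\sum_\ell\log(1+\log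 N_\ell(t))+|\mathcal{L}(\mathcal{T})|\mathcal{C}_{\exp}\big(\frac{\log(1/\delta)}{|\mathcal{L}(\mathcal{T})|}\big)$. *)

theory Defs
  imports "HOL-Probability.Probability"
begin

text \<open>Base measure rho on the reals, natural parameters in an open interval Theta.
  The member with natural parameter eta has density exp(eta x - b(eta)) w.r.t. rho.\<close>

definition lpart :: "real measure \<Rightarrow> real \<Rightarrow> real" where
  "lpart \<rho> \<eta> = ln (\<integral>x. exp (\<eta> * x) \<partial>\<rho>)"

definition ef_dist :: "real measure \<Rightarrow> real \<Rightarrow> real measure" where
  "ef_dist \<rho> \<eta> = density \<rho> (\<lambda>x. ennreal (exp (\<eta> * x - lpart \<rho> \<eta>)))"

definition ef_mean :: "real measure \<Rightarrow> real \<Rightarrow> real" where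
  "ef_mean \<rho> \<eta> = (\<integral>x. x \<partial>(ef_dist \<rho> \<eta>))"

definition exp_family :: "real measure \<Rightarrow> real set \<Rightarrow> bool" where
  "exp_family \<rho> \<Theta> \<longleftrightarrow> sets \<rho> = sets borel \<and> sigma_finite_measure \<rho> \<and>
     open \<Theta> \<and> is_interval \<Theta> \<and> \<Theta> \<noteq> {} \<and>
     (\<forall>\<eta>\<in>\<Theta>. integrable \<rho> (\<lambda>x. exp (\<eta> * x))) \<and>
     \<not> (\<exists>c. AE x in \<rho>. x = c)"

definition mean_set :: "real measure \<Rightarrow> real set \<Rightarrow> real set" where
  "mean_set \<rho> \<Theta> = ef_mean \<rho> ` \<Theta>"

definition nat_param :: "real measure \<Rightarrow> real set \<Rightarrow> real \<Rightarrow> real" where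
  "nat_param \<rho> \<Theta> x = (THE \<eta>. \<eta> \<in> \<Theta> \<and> ef_mean \<rho> \<eta> = x)"

definition fam :: "real measure \<Rightarrow> real set \<Rightarrow> real \<Rightarrow> real measure" where
  "fam \<rho> \<Theta> x = ef_dist \<rho> (nat_param \<rho> \<Theta> x)"

text \<open>d(x,y) = KL(nu_x || nu_y) (natural logarithm).\<close>
definition dKL :: "real measure \<Rightarrow> real set \<Rightarrow> real \<Rightarrow> real \<Rightarrow> real" where
  "dKL \<rho> \<Theta> x y = KL_divergence (exp 1) (fam \<rho> \<Theta> y) (fam \<rho> \<Theta> x)"

text \<open>Extension of d to a first argument outside X (needed for empirical means that
  fall outside X), by the standard variational formula; equals d on X.\<close>
definition dext :: "real measure \<Rightarrow> real set \<Rightarrow> real \<Rightarrow> real \<Rightarrow> ereal" where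
  "dext \<rho> \<Theta> x y = (if x \<in> mean_set \<rho> \<Theta> then ereal (dKL \<rho> \<Theta> x y)
     else (SUP \<eta>\<in>\<Theta>. ereal ((\<eta> - nat_param \<rho> \<Theta> y) * x - lpart \<rho> \<eta> + lpart \<rho> (nat_param \<rho> \<Theta> y))))"

datatype label = MAXn | MINn

datatype 'l mmtree = Leaf 'l | Node label "'l mmtree list"

fun leaves :: "'l mmtree \<Rightarrow> 'l list" where
  "leaves (Leaf l) = [l]"
| "leaves (Node _ cs) = concat (map leaves cs)"

fun wf_tree :: "'l mmtree \<Rightarrow> bool" where
  "wf_tree (Leaf l) = True"
| "wf_tree (Node _ cs) = (cs \<noteq> [] \<and> (\<forall>c\<in>set cs. wf_tree c))"

fun Vval :: "'l mmtree \<Rightarrow> ('l \<Rightarrow> real) \<Rightarrow> real" where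
  "Vval (Leaf l) lam = lam l"
| "Vval (Node MAXn cs) lam = Max (set (map (\<lambda>c. Vval c lam) cs))"
| "Vval (Node MINn cs) lam = Min (set (map (\<lambda>c. Vval c lam) cs))"

text \<open>a_s(lambda): True means 'win', False means 'lose'.\<close>
definition aval :: "'l mmtree \<Rightarrow> real \<Rightarrow> ('l \<Rightarrow> real) \<Rightarrow> bool" where
  "aval T \<theta> lam \<longleftrightarrow> Vval T lam \<ge> \<theta>"

definition Plab :: "bool \<Rightarrow> label" where
  "Plab win = (if win then MAXn else MINn)"

text \<open>d_s for the subtree, given the root answer win = a^*.\<close>
fun dval :: "(real \<Rightarrow> real \<Rightarrow> real) \<Rightarrow> real \<Rightarrow> bool \<Rightarrow> ('l \<Rightarrow> real) \<Rightarrow> 'l mmtree \<Rightarrow> real" where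
  "dval d \<theta> win \<mu> (Leaf l) =
     (if (win \<and> \<mu> l \<ge> \<theta>) \<or> (\<not> win \<and> \<mu> l < \<theta>) then d (\<mu> l) \<theta> else 0)"
| "dval d \<theta> win \<mu> (Node L cs) =
     (if L = Plab win then Max (set (map (dval d \<theta> win \<mu>) cs))
      else if (\<forall>c\<in>set cs. dval d \<theta> win \<mu> c > 0)
        then 1 / (\<Sum>c\<leftarrow>cs. 1 / dval d \<theta> win \<mu> c)
      else 0)"

text \<open>Admissible recursive weight vectors w^s (any choice of arg max and of the
  arbitrary probability vectors is allowed).\<close>
inductive is_w :: "(real \<Rightarrow> real \<Rightarrow> real) \<Rightarrow> real \<Rightarrow> bool \<Rightarrow> ('l \<Rightarrow> real) \<Rightarrow> 'l mmtree \<Rightarrow> ('l \<Rightarrow> real) \<Rightarrow> bool"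
  for d \<theta> win \<mu> where
  leaf: "is_w d \<theta> win \<mu> (Leaf l) (\<lambda>x. if x = l then 1 else 0)"
| pnode: "\<lbrakk> L = Plab win; dval d \<theta> win \<mu> (Node L cs) > 0; i < length cs;
           dval d \<theta> win \<mu> (cs ! i) = dval d \<theta> win \<mu> (Node L cs);
           is_w d \<theta> win \<mu> (cs ! i) w \<rbrakk> \<Longrightarrow> is_w d \<theta> win \<mu> (Node L cs) w"
| qnode: "\<lbrakk> L \<noteq> Plab win; \<forall>c\<in>set cs. dval d \<theta> win \<mu> c > 0;
           \<forall>i<length cs. is_w d \<theta> win \<mu> (cs ! i) (ws i) \<rbrakk> \<Longrightarrow>
           is_w d \<theta> win \<mu> (Node L cs)
             (\<lambda>x. (\<Sum>i<length cs. ws i x / dval d \<theta> win \<mu> (cs ! i)) /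
                  (\<Sum>i<length cs. 1 / dval d \<theta> win \<mu> (cs ! i)))"
| zero: "\<lbrakk> dval d \<theta> win \<mu> (Node L cs) = 0; \<forall>x. w x \<ge> 0;
           \<forall>x. x \<notin> set (leaves (Node L cs)) \<longrightarrow> w x = 0;
           (\<Sum>x\<in>set (leaves (Node L cs)). w x) = 1 \<rbrakk> \<Longrightarrow> is_w d \<theta> win \<mu> (Node L cs) w"

definition hfun :: "real \<Rightarrow> real" where "hfun x = x - ln x"

definition hinv :: "real \<Rightarrow> real" where
  "hinv y = (THE x. x \<ge> 1 \<and> hfun x = y)"

definition htilde :: "real \<Rightarrow> real" where
  "htilde x = (if x \<ge> hfun (1 / ln (3/2)) then exp (1 / hinv x) * hinv x
               else 3/2 * (x - ln (ln (3/2))))"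

definition Cexp :: "real \<Rightarrow> real" where
  "Cexp x = 2 * htilde ((hinv (1 + x) + ln (pi^2 / 3)) / 2)"

section \<open>Sampling model (rounds t = 1, 2, ...; stack-of-rewards model)\<close>

definition Ncnt :: "(nat \<Rightarrow> 'w \<Rightarrow> 'l) \<Rightarrow> 'l \<Rightarrow> nat \<Rightarrow> 'w \<Rightarrow> nat" where
  "Ncnt I l t \<omega> = card {s \<in> {1..t}. I s \<omega> = l}"

text \<open>The k-th pull (k = 0,1,...) of leaf l yields Y l k; reward observed at round s.\<close>
definition obs :: "(nat \<Rightarrow> 'w \<Rightarrow> 'l) \<Rightarrow> ('l \<Rightarrow> nat \<Rightarrow> 'w \<Rightarrow> real) \<Rightarrow> nat \<Rightarrow> 'w \<Rightarrow> real" where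
  "obs I Y s \<omega> = Y (I s \<omega>) (Ncnt I (I s \<omega>) (s - 1) \<omega>) \<omega>"

definition muhat :: "(nat \<Rightarrow> 'w \<Rightarrow> 'l) \<Rightarrow> ('l \<Rightarrow> nat \<Rightarrow> 'w \<Rightarrow> real) \<Rightarrow> nat \<Rightarrow> 'w \<Rightarrow> 'l \<Rightarrow> real" where
  "muhat I Y t \<omega> l = (\<Sum>k<Ncnt I l t \<omega>. Y l k \<omega>) / real (Ncnt I l t \<omega>)"

definition Zstat :: "real measure \<Rightarrow> real set \<Rightarrow> real \<Rightarrow> 'l mmtree \<Rightarrow> (nat \<Rightarrow> 'w \<Rightarrow> 'l) \<Rightarrow>
    ('l \<Rightarrow> nat \<Rightarrow> 'w \<Rightarrow> real) \<Rightarrow> nat \<Rightarrow> 'w \<Rightarrow> ereal" where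
  "Zstat \<rho> \<Theta> \<theta> T I Y t \<omega> =
     (INF lam\<in>{lam. (\<forall>l\<in>set (leaves T). lam l \<in> mean_set \<rho> \<Theta>) \<and>
                 aval T \<theta> lam \<noteq> aval T \<theta> (muhat I Y t \<omega>)}.
        \<Sum>l\<in>set (leaves T). ereal (real (Ncnt I l t \<omega>)) * dext \<rho> \<Theta> (muhat I Y t \<omega> l) (lam l))"

definition beta :: "'l mmtree \<Rightarrow> (nat \<Rightarrow> 'w \<Rightarrow> 'l) \<Rightarrow> nat \<Rightarrow> real \<Rightarrow> 'w \<Rightarrow> real" where
  "beta T I t \<delta> \<omega> =
     3 * (\<Sum>l\<in>set (leaves T). ln (1 + ln (real (Ncnt I l t \<omega>))))
     + real (card (set (leaves T))) * Cexp (ln (1 / \<delta>) / real (card (set (leaves T))))"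

definition tau :: "real measure \<Rightarrow> real set \<Rightarrow> real \<Rightarrow> 'l mmtree \<Rightarrow> (nat \<Rightarrow> 'w \<Rightarrow> 'l) \<Rightarrow>
    ('l \<Rightarrow> nat \<Rightarrow> 'w \<Rightarrow> real) \<Rightarrow> real \<Rightarrow> 'w \<Rightarrow> enat" where
  "tau \<rho> \<Theta> \<theta> T I Y \<delta> \<omega> =
     (if \<exists>t. Zstat \<rho> \<Theta> \<theta> T I Y t \<omega> \<ge> ereal (beta T I t \<delta> \<omega>)
      then enat (LEAST t. Zstat \<rho> \<Theta> \<theta> T I Y t \<omega> \<ge> ereal (beta T I t \<delta> \<omega>))
      else \<infinity>)"

end

theory Submission
  imports Defs "HOL-Library.Discrete_Functions" "HOL-Real_Asymp.Real_Asymp"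
begin

text \<open>Once every leaf of positive weight \<open>w\<^sub>\<ell>\<close> has been sampled about \<open>w\<^sub>\<ell> t\<close> times (the
  sampling assumption) and its empirical mean is close to \<open>\<mu>\<^sub>\<ell>\<close> (the strong law, applied to the
  reward sequence of that leaf), the empirical means give the same answer as \<open>\<mu>\<close>, and the GLR
  statistic against any alternative with the opposite answer is at least \<open>t (d\<^sub>s\<^sub>0 - \<epsilon>)\<close>: the
  recursive weights attain \<open>d\<^sub>s\<^sub>0\<close> in the max-min problem defining it, and a divergence to an
  alternative only decreases when the alternative is moved to \<open>\<theta>\<close>. The threshold is
  \<open>ln (1/\<delta>) (1 + o(1)) + O(ln ln t)\<close>, so \<open>\<tau>\<^sub>\<delta> \<le> (1 + o(1)) ln (1/\<delta>) / d\<^sub>s\<^sub>0\<close>.\<close>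

section \<open>Exponential families\<close>

definition ef_density :: "real measure \<Rightarrow> real \<Rightarrow> real \<Rightarrow> real" where
  "ef_density \<rho> \<eta> x = exp (\<eta> * x - lpart \<rho> \<eta>)"

lemma ef_density_pos: "ef_density \<rho> \<eta> x > 0"
  by (simp add: ef_density_def)

lemma ef_dist_eq_density: "ef_dist \<rho> \<eta> = density \<rho> (\<lambda>x. ennreal (ef_density \<rho> \<eta> x))"
  by (simp add: ef_dist_def ef_density_def)

text \<open>The affine minorants of \<open>x \<mapsto> d(x, y)\<close>: \<open>d(x, y)\<close> is their supremum over \<open>\<eta>\<close>,
  attained at the natural parameter of \<open>x\<close>, and \<open>dext\<close> extends \<open>d\<close> by this formula.\<close>

definition kl_tangent :: "real measure \<Rightarrow> real set \<Rightarrow> real \<Rightarrow> real \<Rightarrow> real \<Rightarrow> real" where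
  "kl_tangent \<rho> \<Theta> \<eta> y x = (\<eta> - nat_param \<rho> \<Theta> y) * x - lpart \<rho> \<eta> + lpart \<rho> (nat_param \<rho> \<Theta> y)"

lemma tendsto_kl_tangent:
  "(f \<longlongrightarrow> x) F \<Longrightarrow> ((\<lambda>t. kl_tangent \<rho> \<Theta> \<eta> y (f t)) \<longlongrightarrow> kl_tangent \<rho> \<Theta> \<eta> y x) F"
  unfolding kl_tangent_def by (intro tendsto_intros)

lemma abs_le_exp_sum:
  fixes t h :: real
  assumes "h > 0"
  shows "\<bar>t\<bar> \<le> (exp (h * t) + exp (- (h * t))) / h"
proof -
  have "h * \<bar>t\<bar> \<le> exp (h * \<bar>t\<bar>)"
    using exp_ge_add_one_self[of "h * \<bar>t\<bar>"] by linarith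
  also have "\<dots> \<le> exp (h * t) + exp (- (h * t))"
    by (cases "t \<ge> 0") (auto simp: abs_if)
  finally show ?thesis
    using assms by (simp add: field_simps mult.commute)
qed

lemma square_le_exp_sum:
  fixes t h :: real
  assumes "h > 0"
  shows "t\<^sup>2 \<le> 4 * (exp (h * t) + exp (- (h * t))) / h\<^sup>2"
proof -
  have "h * \<bar>t\<bar> / 2 \<le> exp (h * \<bar>t\<bar> / 2)"
    using exp_ge_add_one_self[of "h * \<bar>t\<bar> / 2"] by linarith
  then have "(h * \<bar>t\<bar> / 2)\<^sup>2 \<le> exp (h * \<bar>t\<bar> / 2) ^ 2"
    using assms by (intro power_mono) auto
  also have "\<dots> = exp (h * \<bar>t\<bar>)"
    by (simp add: power2_eq_square exp_add[symmetric])
  also have "\<dots> \<le> exp (h * t) + exp (- (h * t))"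
    by (cases "t \<ge> 0") (auto simp: abs_if)
  finally have "h\<^sup>2 * t\<^sup>2 / 4 \<le> exp (h * t) + exp (- (h * t))"
    by (simp add: power_mult_distrib power_divide)
  then show ?thesis
    using assms by (simp add: field_simps)
qed

context
  fixes \<rho> :: "real measure" and \<Theta> :: "real set"
  assumes exp_family: "exp_family \<rho> \<Theta>"
begin

lemma borel_measurable_base: "f \<in> borel_measurable borel \<Longrightarrow> f \<in> borel_measurable \<rho>"
  using exp_family measurable_cong_sets[of \<rho> borel] by (auto simp: exp_family_def)

lemma integrable_exp_linear: "\<eta> \<in> \<Theta> \<Longrightarrow> integrable \<rho> (\<lambda>x. exp (\<eta> * x))"
  using exp_family by (simp add: exp_family_def)

lemma integral_exp_linear_pos:
  assumes "\<eta> \<in> \<Theta>"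
  shows "(\<integral>x. exp (\<eta> * x) \<partial>\<rho>) > 0"
proof -
  have "(\<integral>x. exp (\<eta> * x) \<partial>\<rho>) \<noteq> 0"
  proof
    assume "(\<integral>x. exp (\<eta> * x) \<partial>\<rho>) = 0"
    then have "AE x in \<rho>. exp (\<eta> * x) = 0"
      using integral_nonneg_eq_0_iff_AE[OF integrable_exp_linear[OF assms]] by auto
    then have "AE x in \<rho>. x = 0"
      by (rule eventually_mono) simp
    then show False
      using exp_family by (simp add: exp_family_def)
  qed
  moreover have "(\<integral>x. exp (\<eta> * x) \<partial>\<rho>) \<ge> 0"
    by (intro integral_nonneg_AE) auto
  ultimately show ?thesis
    by linarith
qed

lemma ef_density_eq:
  "\<eta> \<in> \<Theta> \<Longrightarrow> ef_density \<rho> \<eta> x = exp (\<eta> * x) / (\<integral>x. exp (\<eta> * x) \<partial>\<rho>)"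
  using integral_exp_linear_pos by (simp add: ef_density_def lpart_def exp_diff)

lemma borel_measurable_ef_density[measurable]: "ef_density \<rho> \<eta> \<in> borel_measurable \<rho>"
  by (rule borel_measurable_base) (simp add: ef_density_def[abs_def])

lemma integrable_ef_density:
  assumes "\<eta> \<in> \<Theta>"
  shows "integrable \<rho> (ef_density \<rho> \<eta>)"
proof -
  have "ef_density \<rho> \<eta> = (\<lambda>x. exp (\<eta> * x) / (\<integral>x. exp (\<eta> * x) \<partial>\<rho>))"
    using assms by (simp add: fun_eq_iff ef_density_eq)
  then show ?thesis
    using integrable_exp_linear[OF assms] by simp
qed

lemma integral_ef_density: "\<eta> \<in> \<Theta> \<Longrightarrow> (\<integral>x. ef_density \<rho> \<eta> x \<partial>\<rho>) = 1"
  using integral_exp_linear_pos[of \<eta>] by (simp add: ef_density_eq)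

text \<open>As \<open>\<Theta>\<close> is open, \<open>exp ((\<eta> \<plusminus> h) x)\<close> is integrable for some \<open>h > 0\<close>, and together these
  dominate \<open>g x exp (\<eta> x)\<close>.\<close>

lemma integrable_ef_density_mult:
  assumes "\<eta> \<in> \<Theta>" and g: "g \<in> borel_measurable borel"
    and bound: "\<And>h. h > 0 \<Longrightarrow> \<exists>C. \<forall>x. \<bar>g x\<bar> \<le> C * (exp (h * x) + exp (- (h * x)))"
  shows "integrable \<rho> (\<lambda>x. ef_density \<rho> \<eta> x * g x)"
proof -
  have "open \<Theta>"
    using exp_family by (simp add: exp_family_def)
  then obtain e where e: "e > 0" "ball \<eta> e \<subseteq> \<Theta>"
    using assms(1) openE by blast
  define h where "h = e / 2"
  have h: "h > 0" "\<eta> + h \<in> \<Theta>" "\<eta> - h \<in> \<Theta>"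
    using e by (auto simp: h_def dist_real_def)
  obtain C where C: "\<And>x. \<bar>g x\<bar> \<le> C * (exp (h * x) + exp (- (h * x)))"
    using bound[OF h(1)] by blast
  have "integrable \<rho> (\<lambda>x. C * (exp ((\<eta> + h) * x) + exp ((\<eta> - h) * x)))"
    using integrable_exp_linear[OF h(2)] integrable_exp_linear[OF h(3)] by auto
  then have "integrable \<rho> (\<lambda>x. g x * exp (\<eta> * x))"
  proof (rule Bochner_Integration.integrable_bound)
    show "(\<lambda>x. g x * exp (\<eta> * x)) \<in> borel_measurable \<rho>"
      using g by (intro borel_measurable_base) simp
    show "AE x in \<rho>. norm (g x * exp (\<eta> * x)) \<le> norm (C * (exp ((\<eta> + h) * x) + exp ((\<eta> - h) * x)))"
    proof (intro AE_I2)
      fix x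
      have "\<bar>g x\<bar> * exp (\<eta> * x) \<le> C * (exp (h * x) + exp (- (h * x))) * exp (\<eta> * x)"
        using C by (intro mult_right_mono) auto
      also have "\<dots> = C * (exp ((\<eta> + h) * x) + exp ((\<eta> - h) * x))"
        by (simp add: algebra_simps exp_add[symmetric])
      also have "\<dots> \<le> \<bar>C * (exp ((\<eta> + h) * x) + exp ((\<eta> - h) * x))\<bar>"
        by (rule abs_ge_self)
      finally show "norm (g x * exp (\<eta> * x)) \<le> norm (C * (exp ((\<eta> + h) * x) + exp ((\<eta> - h) * x)))"
        by (simp add: abs_mult)
    qed
  qed
  then show ?thesis
    using assms(1) by (simp add: ef_density_eq mult.commute)
qed

lemma integrable_ef_density_mult_id: "\<eta> \<in> \<Theta> \<Longrightarrow> integrable \<rho> (\<lambda>x. ef_density \<rho> \<eta> x * x)"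
proof (rule integrable_ef_density_mult)
  fix h :: real assume "h > 0"
  then show "\<exists>C. \<forall>x. \<bar>x\<bar> \<le> C * (exp (h * x) + exp (- (h * x)))"
    using abs_le_exp_sum[of h] by (intro exI[of _ "1 / h"]) simp
qed auto

lemma integrable_ef_density_mult_square:
  "\<eta> \<in> \<Theta> \<Longrightarrow> integrable \<rho> (\<lambda>x. ef_density \<rho> \<eta> x * x\<^sup>2)"
proof (rule integrable_ef_density_mult)
  fix h :: real assume "h > 0"
  then show "\<exists>C. \<forall>x. \<bar>x\<^sup>2\<bar> \<le> C * (exp (h * x) + exp (- (h * x)))"
    using square_le_exp_sum[of h] by (intro exI[of _ "4 / h\<^sup>2"]) simp
qed auto

lemma ef_mean_eq_integral: "ef_mean \<rho> \<eta> = (\<integral>x. ef_density \<rho> \<eta> x * x \<partial>\<rho>)"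
  unfolding ef_mean_def ef_dist_eq_density
  by (subst integral_real_density) (auto intro: less_imp_le[OF ef_density_pos] borel_measurable_base)

text \<open>The gap in the tangent inequality of the log-partition function is the integral of
  \<open>\<phi>(log r)\<close> against the density ratio \<open>r\<close>, with \<open>\<phi>(u) = e\<^sup>u - 1 - u \<ge> 0\<close>; as \<open>\<phi>\<close> vanishes only
  at \<open>0\<close>, equality forces \<open>\<rho>\<close> to be a point mass.\<close>

lemma lpart_gap_integral:
  assumes "\<eta>1 \<in> \<Theta>" "\<eta>2 \<in> \<Theta>" "a = \<eta>2 - \<eta>1" "c = lpart \<rho> \<eta>2 - lpart \<rho> \<eta>1"
  shows "integrable \<rho> (\<lambda>x. ef_density \<rho> \<eta>1 x * (exp (a * x - c) - 1 - (a * x - c)))"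
    and "(\<integral>x. ef_density \<rho> \<eta>1 x * (exp (a * x - c) - 1 - (a * x - c)) \<partial>\<rho>) = c - a * ef_mean \<rho> \<eta>1"
proof -
  have eq: "(\<lambda>x. ef_density \<rho> \<eta>1 x * (exp (a * x - c) - 1 - (a * x - c))) =
      (\<lambda>x. ef_density \<rho> \<eta>2 x - ef_density \<rho> \<eta>1 x - (a * (ef_density \<rho> \<eta>1 x * x) - c * ef_density \<rho> \<eta>1 x))"
    unfolding assms(3,4) by (simp add: fun_eq_iff ef_density_def algebra_simps exp_add[symmetric])
  note ints = integrable_ef_density[OF assms(1)] integrable_ef_density[OF assms(2)]
    integrable_ef_density_mult_id[OF assms(1)]
  show "integrable \<rho> (\<lambda>x. ef_density \<rho> \<eta>1 x * (exp (a * x - c) - 1 - (a * x - c)))"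
    unfolding eq using ints by auto
  show "(\<integral>x. ef_density \<rho> \<eta>1 x * (exp (a * x - c) - 1 - (a * x - c)) \<partial>\<rho>) = c - a * ef_mean \<rho> \<eta>1"
    unfolding eq using ints by (simp add: integral_ef_density assms(1,2) ef_mean_eq_integral)
qed

lemma lpart_tangent:
  assumes "\<eta>1 \<in> \<Theta>" "\<eta>2 \<in> \<Theta>"
  shows "(\<eta>2 - \<eta>1) * ef_mean \<rho> \<eta>1 \<le> lpart \<rho> \<eta>2 - lpart \<rho> \<eta>1"
    and "\<eta>1 \<noteq> \<eta>2 \<Longrightarrow> (\<eta>2 - \<eta>1) * ef_mean \<rho> \<eta>1 < lpart \<rho> \<eta>2 - lpart \<rho> \<eta>1"
proof -
  define a where "a = \<eta>2 - \<eta>1"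
  define c where "c = lpart \<rho> \<eta>2 - lpart \<rho> \<eta>1"
  define G where "G x = ef_density \<rho> \<eta>1 x * (exp (a * x - c) - 1 - (a * x - c))" for x
  note gap = lpart_gap_integral[OF assms a_def c_def, folded G_def]
  have G_nonneg: "G x \<ge> 0" for x
  proof -
    have "exp (a * x - c) - 1 - (a * x - c) \<ge> 0"
      using exp_ge_add_one_self[of "a * x - c"] by linarith
    then show ?thesis
      using ef_density_pos[of \<rho> \<eta>1 x] by (simp add: G_def)
  qed
  then have "(\<integral>x. G x \<partial>\<rho>) \<ge> 0"
    by (intro integral_nonneg_AE) auto
  then show le: "(\<eta>2 - \<eta>1) * ef_mean \<rho> \<eta>1 \<le> lpart \<rho> \<eta>2 - lpart \<rho> \<eta>1"
    using gap(2) by (simp add: a_def c_def)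
  assume "\<eta>1 \<noteq> \<eta>2"
  show "(\<eta>2 - \<eta>1) * ef_mean \<rho> \<eta>1 < lpart \<rho> \<eta>2 - lpart \<rho> \<eta>1"
  proof (rule ccontr)
    assume "\<not> ?thesis"
    then have "(\<integral>x. G x \<partial>\<rho>) = 0"
      using le gap(2) by (simp add: a_def c_def)
    then have "AE x in \<rho>. G x = 0"
      using integral_nonneg_eq_0_iff_AE[OF gap(1)] G_nonneg by auto
    then have "AE x in \<rho>. x = c / a"
    proof (rule eventually_mono)
      fix x
      assume "G x = 0"
      then have "1 - (c - a * x) = exp (- (c - a * x))"
        using ef_density_pos[of \<rho> \<eta>1 x] by (simp add: G_def)
      then show "x = c / a"
        using exp_minus_greater[of "c - a * x"] \<open>\<eta>1 \<noteq> \<eta>2\<close> by (auto simp: a_def field_simps)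
    qed
    then show False
      using exp_family by (simp add: exp_family_def)
  qed
qed

lemma ef_mean_strict_mono:
  assumes "\<eta>1 \<in> \<Theta>" "\<eta>2 \<in> \<Theta>" "\<eta>1 < \<eta>2"
  shows "ef_mean \<rho> \<eta>1 < ef_mean \<rho> \<eta>2"
proof -
  have "(\<eta>2 - \<eta>1) * ef_mean \<rho> \<eta>1 < (\<eta>2 - \<eta>1) * ef_mean \<rho> \<eta>2"
    using lpart_tangent(2)[OF assms(1,2)] lpart_tangent(2)[OF assms(2,1)] assms(3)
    by (simp add: algebra_simps)
  then show ?thesis
    using assms(3) by simp
qed

lemma
  assumes "x \<in> mean_set \<rho> \<Theta>"
  shows nat_param_in: "nat_param \<rho> \<Theta> x \<in> \<Theta>"
    and ef_mean_nat_param: "ef_mean \<rho> (nat_param \<rho> \<Theta> x) = x"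
proof -
  obtain \<eta> where \<eta>: "\<eta> \<in> \<Theta>" "ef_mean \<rho> \<eta> = x"
    using assms by (auto simp: mean_set_def)
  have "nat_param \<rho> \<Theta> x = \<eta>"
    unfolding nat_param_def
  proof (rule the_equality)
    fix \<eta>' assume "\<eta>' \<in> \<Theta> \<and> ef_mean \<rho> \<eta>' = x"
    then show "\<eta>' = \<eta>"
      using \<eta> ef_mean_strict_mono[of \<eta> \<eta>'] ef_mean_strict_mono[of \<eta>' \<eta>]
      by (cases \<eta> \<eta>' rule: linorder_cases) auto
  qed (use \<eta> in simp)
  then show "nat_param \<rho> \<Theta> x \<in> \<Theta>" "ef_mean \<rho> (nat_param \<rho> \<Theta> x) = x"
    using \<eta> by auto
qed

lemma nat_param_mono:
  assumes "x \<in> mean_set \<rho> \<Theta>" "y \<in> mean_set \<rho> \<Theta>" "x \<le> y"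
  shows "nat_param \<rho> \<Theta> x \<le> nat_param \<rho> \<Theta> y"
  using ef_mean_strict_mono[OF nat_param_in[OF assms(2)] nat_param_in[OF assms(1)]] assms
  by (force simp: ef_mean_nat_param)

lemma dKL_eq:
  assumes "x \<in> mean_set \<rho> \<Theta>" "y \<in> mean_set \<rho> \<Theta>"
  shows "dKL \<rho> \<Theta> x y = kl_tangent \<rho> \<Theta> (nat_param \<rho> \<Theta> x) y x"
proof -
  define ex where "ex = nat_param \<rho> \<Theta> x"
  define ey where "ey = nat_param \<rho> \<Theta> y"
  have ex: "ex \<in> \<Theta>" "ef_mean \<rho> ex = x"
    using assms(1) by (auto simp: ex_def nat_param_in ef_mean_nat_param)
  have log_ratio: "log (exp 1) (ef_density \<rho> ex z / ef_density \<rho> ey z)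
      = (ex - ey) * z - lpart \<rho> ex + lpart \<rho> ey" for z
    by (simp add: ef_density_def exp_diff[symmetric] log_def algebra_simps)
  interpret sigma_finite_measure \<rho>
    using exp_family by (simp add: exp_family_def)
  have "dKL \<rho> \<Theta> x y = KL_divergence (exp 1) (density \<rho> (\<lambda>z. ennreal (ef_density \<rho> ey z)))
      (density \<rho> (\<lambda>z. ennreal (ef_density \<rho> ex z)))"
    by (simp add: dKL_def fam_def ef_dist_eq_density ex_def ey_def)
  also have "\<dots> = (\<integral>z. ef_density \<rho> ex z * log (exp 1) (ef_density \<rho> ex z / ef_density \<rho> ey z) \<partial>\<rho>)"
    by (rule KL_density_density) (auto simp: less_imp_le[OF ef_density_pos] ef_density_pos[THEN less_imp_neq, symmetric])
  also have "\<dots> = (\<integral>z. (ex - ey) * (ef_density \<rho> ex z * z)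
      + (lpart \<rho> ey - lpart \<rho> ex) * ef_density \<rho> ex z \<partial>\<rho>)"
    unfolding log_ratio by (simp add: algebra_simps)
  also have "\<dots> = (ex - ey) * x + (lpart \<rho> ey - lpart \<rho> ex)"
    using integrable_ef_density_mult_id[OF ex(1)] integrable_ef_density[OF ex(1)]
      integral_ef_density[OF ex(1)] ex(2)
    by (simp add: ef_mean_eq_integral)
  finally show ?thesis
    by (simp add: kl_tangent_def ex_def ey_def)
qed

lemma dKL_nonneg: "x \<in> mean_set \<rho> \<Theta> \<Longrightarrow> y \<in> mean_set \<rho> \<Theta> \<Longrightarrow> dKL \<rho> \<Theta> x y \<ge> 0"
  using lpart_tangent(1)[OF nat_param_in nat_param_in, of x y]
  by (simp add: dKL_eq kl_tangent_def ef_mean_nat_param algebra_simps)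

lemma dKL_pos:
  assumes "x \<in> mean_set \<rho> \<Theta>" "y \<in> mean_set \<rho> \<Theta>" "x \<noteq> y"
  shows "dKL \<rho> \<Theta> x y > 0"
proof -
  have "nat_param \<rho> \<Theta> x \<noteq> nat_param \<rho> \<Theta> y"
    using assms ef_mean_nat_param by metis
  then show ?thesis
    using lpart_tangent(2)[OF nat_param_in[OF assms(1)] nat_param_in[OF assms(2)]] assms
    by (simp add: dKL_eq kl_tangent_def ef_mean_nat_param algebra_simps)
qed

lemma dKL_self: "x \<in> mean_set \<rho> \<Theta> \<Longrightarrow> dKL \<rho> \<Theta> x x = 0"
  by (simp add: dKL_eq kl_tangent_def)

lemma dext_ge:
  assumes "y \<in> mean_set \<rho> \<Theta>" "\<eta> \<in> \<Theta>"
  shows "dext \<rho> \<Theta> x y \<ge> kl_tangent \<rho> \<Theta> \<eta> y x"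
proof (cases "x \<in> mean_set \<rho> \<Theta>")
  case True
  then show ?thesis
    using lpart_tangent(1)[OF nat_param_in[OF True] assms(2)] assms(1)
    by (simp add: dext_def dKL_eq kl_tangent_def ef_mean_nat_param algebra_simps)
next
  case False
  then show ?thesis
    using assms(2) by (auto simp: dext_def kl_tangent_def intro: SUP_upper2)
qed

lemma dext_nonneg: "y \<in> mean_set \<rho> \<Theta> \<Longrightarrow> dext \<rho> \<Theta> x y \<ge> 0"
  using dext_ge[OF _ nat_param_in, of y y x] by (simp add: kl_tangent_def zero_ereal_def)

text \<open>Moving the alternative \<open>y\<close> to the threshold \<open>\<theta>\<close> decreases the divergence from any \<open>x\<close>
  lying on the other side of \<open>\<theta>\<close>.\<close>

lemma dext_ge_threshold:
  assumes "\<theta> \<in> mean_set \<rho> \<Theta>" "y \<in> mean_set \<rho> \<Theta>" "\<eta> \<in> \<Theta>"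
    and "(nat_param \<rho> \<Theta> \<theta> - nat_param \<rho> \<Theta> y) * (x - \<theta>) \<ge> 0"
  shows "dext \<rho> \<Theta> x y \<ge> kl_tangent \<rho> \<Theta> \<eta> \<theta> x"
proof -
  have "kl_tangent \<rho> \<Theta> \<eta> \<theta> x \<le> kl_tangent \<rho> \<Theta> \<eta> y x"
    using dKL_nonneg[OF assms(1,2)] assms(4)
    by (simp add: dKL_eq[OF assms(1,2)] kl_tangent_def algebra_simps)
  then show ?thesis
    by (intro order.trans[OF _ dext_ge[OF assms(2,3)]]) simp
qed

lemma
  assumes "x \<in> mean_set \<rho> \<Theta>"
  shows integrable_square_fam: "integrable (fam \<rho> \<Theta> x) (\<lambda>z. z\<^sup>2)"
    and mean_fam: "(\<integral>z. z \<partial>fam \<rho> \<Theta> x) = x"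
proof -
  show "integrable (fam \<rho> \<Theta> x) (\<lambda>z. z\<^sup>2)"
    unfolding fam_def ef_dist_eq_density
    using integrable_ef_density_mult_square[OF nat_param_in[OF assms]]
    by (subst integrable_real_density)
      (auto intro!: borel_measurable_base simp: less_imp_le[OF ef_density_pos])
  show "(\<integral>z. z \<partial>fam \<rho> \<Theta> x) = x"
    using ef_mean_nat_param[OF assms] by (simp add: fam_def ef_mean_def)
qed

end

section \<open>Min-max trees and their optimal weights\<close>

lemma Vval_attained:
  assumes "cs \<noteq> []"
  shows "\<exists>c\<in>set cs. Vval (Node L cs) lam = Vval c lam"
proof -
  have "Vval (Node L cs) lam \<in> (\<lambda>c. Vval c lam) ` set cs"
    using assms by (cases L) (simp_all add: Max_in Min_in)
  then show ?thesis
    by auto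
qed

lemma Vval_child_bound:
  assumes "c \<in> set cs"
  shows "if L = MAXn then Vval c lam \<le> Vval (Node L cs) lam else Vval (Node L cs) lam \<le> Vval c lam"
  using assms by (cases L) auto

lemma wrong_side_Plab_child:
  assumes "(\<theta> \<le> Vval (Node (Plab win) cs) lam) \<noteq> win" "c \<in> set cs"
  shows "(\<theta> \<le> Vval c lam) \<noteq> win"
  using Vval_child_bound[OF assms(2), of "Plab win" lam] assms(1)
  by (cases win) (auto simp: Plab_def)

lemma wrong_side_child:
  assumes "(\<theta> \<le> Vval (Node L cs) lam) \<noteq> win" "cs \<noteq> []"
  obtains c where "c \<in> set cs" "(\<theta> \<le> Vval c lam) \<noteq> win"
  using Vval_attained[OF assms(2), of L lam] assms(1) by auto

lemma right_side_nonPlab_child: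
  assumes "if win then \<theta> < Vval (Node L cs) lam else Vval (Node L cs) lam < \<theta>"
    and "L \<noteq> Plab win" "c \<in> set cs"
  shows "if win then \<theta> < Vval c lam else Vval c lam < \<theta>"
  using Vval_child_bound[OF assms(3), of L lam] assms(1,2)
  by (cases win; cases L) (auto simp: Plab_def)

lemma dval_nonPlab:
  assumes "L \<noteq> Plab win" "\<forall>c\<in>set cs. dval d \<theta> win \<mu> c > 0"
  shows "dval d \<theta> win \<mu> (Node L cs) = 1 / (\<Sum>i<length cs. 1 / dval d \<theta> win \<mu> (cs ! i))"
  using assms by (simp add: sum_list_sum_nth atLeast0LessThan)

lemma dval_pos:
  assumes "wf_tree s" "\<forall>l\<in>set (leaves s). \<mu> l \<noteq> \<theta> \<longrightarrow> d (\<mu> l) \<theta> > 0"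
    and "if win then \<theta> < Vval s \<mu> else Vval s \<mu> < \<theta>"
  shows "dval d \<theta> win \<mu> s > 0"
  using assms
proof (induction s)
  case (Leaf l)
  then show ?case
    by (auto split: if_splits)
next
  case (Node L cs)
  have cs: "cs \<noteq> []"
    using Node.prems(1) by simp
  have IH: "dval d \<theta> win \<mu> c > 0"
    if "c \<in> set cs" "if win then \<theta> < Vval c \<mu> else Vval c \<mu> < \<theta>" for c
    using Node.IH[OF that(1)] Node.prems that by auto
  show ?case
  proof (cases "L = Plab win")
    case True
    obtain c where c: "c \<in> set cs" "Vval (Node L cs) \<mu> = Vval c \<mu>"
      using Vval_attained[OF cs] by blast
    then have "if win then \<theta> < Vval c \<mu> else Vval c \<mu> < \<theta>"
      using Node.prems(3) by (simp only: c(2))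
    with c(1) have "dval d \<theta> win \<mu> c > 0"
      by (rule IH)
    with c(1) show ?thesis
      using True cs by (auto simp: Max_gr_iff)
  next
    case False
    have pos: "\<forall>c\<in>set cs. dval d \<theta> win \<mu> c > 0"
      using IH right_side_nonPlab_child[OF Node.prems(3) False] by blast
    have "(\<Sum>i<length cs. 1 / dval d \<theta> win \<mu> (cs ! i)) > 0"
      using pos cs by (intro sum_pos) auto
    then show ?thesis
      using dval_nonPlab[OF False pos] by simp
  qed
qed

lemma is_w_nonneg: "is_w d \<theta> win \<mu> s w \<Longrightarrow> w x \<ge> 0"
proof (induction rule: is_w.induct)
  case (qnode L cs ws)
  have "dval d \<theta> win \<mu> (cs ! i) > 0" if "i < length cs" for i
    using qnode.hyps(2) nth_mem[OF that] by blast
  with qnode.IH show ?case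
    by (intro divide_nonneg_nonneg sum_nonneg) (auto intro: less_imp_le)
qed auto

lemma is_w_pos_leaf:
  assumes "is_w d \<theta> win \<mu> s w" "dval d \<theta> win \<mu> s > 0" "w l > 0"
  shows "dval d \<theta> win \<mu> (Leaf l) > 0 \<and> l \<in> set (leaves s)"
  using assms
proof (induction rule: is_w.induct)
  case (pnode L cs i w)
  then show ?case
    by (auto dest!: nth_mem)
next
  case (qnode L cs ws)
  then have "(\<Sum>i<length cs. ws i l / dval d \<theta> win \<mu> (cs ! i)) \<noteq> 0"
    by (metis div_0 less_irrefl)
  then obtain i where i: "i < length cs" "ws i l / dval d \<theta> win \<mu> (cs ! i) \<noteq> 0"
    by (meson lessThan_iff sum.neutral)
  have "ws i l \<ge> 0"
    using is_w_nonneg[of d \<theta> win \<mu> "cs ! i" "ws i" l] qnode.IH i(1) by blast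
  with i(2) have "ws i l > 0"
    by (simp add: less_le)
  moreover have child: "cs ! i \<in> set cs"
    using i(1) by simp
  moreover have "dval d \<theta> win \<mu> (cs ! i) > 0"
    using qnode.hyps(2) child by blast
  ultimately have "dval d \<theta> win \<mu> (Leaf l) > 0 \<and> l \<in> set (leaves (cs ! i))"
    using qnode.IH i(1) by blast
  then show ?case
    using child by auto
qed (auto split: if_splits)

lemma is_w_wrong_side:
  assumes "is_w d \<theta> win \<mu> s w" "dval d \<theta> win \<mu> s > 0" "(\<theta> \<le> Vval s lam) \<noteq> win"
  shows "\<exists>l. w l > 0 \<and> (\<theta> \<le> lam l) \<noteq> win"
  using assms
proof (induction rule: is_w.induct)
  case (pnode L cs i w)
  then show ?case
    using wrong_side_Plab_child[of \<theta> win cs lam "cs ! i"] by auto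
next
  case (qnode L cs ws)
  have pos: "\<forall>i<length cs. dval d \<theta> win \<mu> (cs ! i) > 0"
    using qnode.hyps(2) by auto
  have "cs \<noteq> []"
    using qnode.prems(1) qnode.hyps(1) by (auto split: if_splits)
  then obtain j where j: "j < length cs" "(\<theta> \<le> Vval (cs ! j) lam) \<noteq> win"
    using wrong_side_child[OF qnode.prems(2)] by (metis in_set_conv_nth)
  obtain l where l: "ws j l > 0" "(\<theta> \<le> lam l) \<noteq> win"
    using qnode.IH j pos by blast
  have "ws i l \<ge> 0" if "i < length cs" for i
    using is_w_nonneg[of d \<theta> win \<mu> "cs ! i" "ws i" l] qnode.IH that by blast
  then have "(\<Sum>i<length cs. ws i l / dval d \<theta> win \<mu> (cs ! i)) > 0"
    using j(1) l(1) pos by (intro sum_pos2[where i=j]) auto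
  moreover have "(\<Sum>i<length cs. 1 / dval d \<theta> win \<mu> (cs ! i)) > 0"
    using j(1) pos by (intro sum_pos2[where i=j]) auto
  ultimately show ?case
    using l(2) by (intro exI[of _ l]) simp
qed auto

lemma harmonic_mix_ge:
  fixes D X :: "'i \<Rightarrow> real"
  assumes "finite I" "j \<in> I" "\<forall>i\<in>I. D i > 0" "\<forall>i\<in>I. X i \<ge> 0" "X j \<ge> D j - \<epsilon>" "\<epsilon> \<ge> 0"
  shows "(\<Sum>i\<in>I. X i / D i) / (\<Sum>i\<in>I. 1 / D i) \<ge> 1 / (\<Sum>i\<in>I. 1 / D i) - \<epsilon>"
proof -
  define S where "S = (\<Sum>i\<in>I. 1 / D i)"
  have Dj: "D j > 0"
    using assms by auto
  have S: "S \<ge> 1 / D j"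
    unfolding S_def using assms by (intro member_le_sum) auto
  with Dj have "S > 0"
    by (smt (verit) divide_pos_pos)
  have "1 - \<epsilon> * S \<le> 1 - \<epsilon> / D j"
    using S assms(6) by (simp add: divide_inverse mult_left_mono)
  also have "\<dots> = (D j - \<epsilon>) / D j"
    using Dj by (simp add: field_simps)
  also have "\<dots> \<le> X j / D j"
    using assms(5) Dj by (intro divide_right_mono) auto
  also have "\<dots> \<le> (\<Sum>i\<in>I. X i / D i)"
    using assms by (intro member_le_sum) auto
  finally have "(1 - \<epsilon> * S) / S \<le> (\<Sum>i\<in>I. X i / D i) / S"
    using \<open>S > 0\<close> by (intro divide_right_mono) auto
  moreover have "(1 - \<epsilon> * S) / S = 1 / S - \<epsilon>"
    using \<open>S > 0\<close> by (simp add: field_simps)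
  ultimately show ?thesis
    by (simp add: S_def)
qed

lemma sum_mix_swap:
  fixes W :: "'i \<Rightarrow> 'l \<Rightarrow> real"
  shows "(\<Sum>l\<in>A. (\<Sum>i\<in>I. W i l / D i) / S * e l) = (\<Sum>i\<in>I. (\<Sum>l\<in>A. W i l * e l) / D i) / S"
proof -
  have "(\<Sum>l\<in>A. (\<Sum>i\<in>I. W i l / D i) / S * e l) = (\<Sum>l\<in>A. \<Sum>i\<in>I. W i l * e l / D i / S)"
    unfolding sum_divide_distrib sum_distrib_right by (intro sum.cong refl) simp
  also have "\<dots> = (\<Sum>i\<in>I. \<Sum>l\<in>A. W i l * e l / D i / S)"
    by (rule sum.swap)
  also have "\<dots> = (\<Sum>i\<in>I. (\<Sum>l\<in>A. W i l * e l) / D i) / S"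
    by (simp add: sum_divide_distrib)
  finally show ?thesis .
qed

text \<open>The weights \<open>w\<close> attain \<open>d\<^sub>s\<close> in its max-min characterisation: they guarantee
  \<open>d\<^sub>s\<close> against every alternative that flips the answer.\<close>

lemma is_w_weighted_sum_ge:
  assumes "is_w d \<theta> win \<mu> s w" "dval d \<theta> win \<mu> s > 0" "(\<theta> \<le> Vval s lam) \<noteq> win"
    and "finite A" "set (leaves s) \<subseteq> A" "\<forall>l\<in>A. e l \<ge> 0" "\<epsilon> \<ge> 0"
    and "\<And>l. w l > 0 \<Longrightarrow> (\<theta> \<le> lam l) \<noteq> win \<Longrightarrow> e l \<ge> dval d \<theta> win \<mu> (Leaf l) - \<epsilon>"
  shows "(\<Sum>l\<in>A. w l * e l) \<ge> dval d \<theta> win \<mu> s - \<epsilon>"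
  using assms
proof (induction rule: is_w.induct)
  case (leaf l)
  have "(\<Sum>x\<in>A. (if x = l then 1 else 0) * e x) = (\<Sum>x\<in>A. if x = l then e x else 0)"
    by (intro sum.cong) auto
  also have "\<dots> = e l"
    using leaf.prems(3,4) by simp
  finally show ?case
    using leaf.prems(2) leaf.prems(7)[of l] by simp
next
  case (pnode L cs i w)
  have child: "cs ! i \<in> set cs"
    using pnode.hyps(3) by simp
  have "(\<theta> \<le> Vval (cs ! i) lam) \<noteq> win"
    using wrong_side_Plab_child pnode.prems(2) pnode.hyps(1) child by blast
  moreover have "set (leaves (cs ! i)) \<subseteq> A"
    using pnode.prems(4) child by auto
  ultimately have "(\<Sum>l\<in>A. w l * e l) \<ge> dval d \<theta> win \<mu> (cs ! i) - \<epsilon>"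
    using pnode.hyps(2,4) pnode.prems(3,5,6,7) by (intro pnode.IH) auto
  then show ?case
    using pnode.hyps(4) by simp
next
  case (qnode L cs ws)
  define D where "D i = dval d \<theta> win \<mu> (cs ! i)" for i
  have pos: "\<forall>i\<in>{..<length cs}. D i > 0"
    using qnode.hyps(2) by (auto simp: D_def)
  have "cs \<noteq> []"
    using qnode.prems(1) qnode.hyps(1) by (auto split: if_splits)
  then obtain j where j: "j < length cs" "(\<theta> \<le> Vval (cs ! j) lam) \<noteq> win"
    using wrong_side_child[OF qnode.prems(2)] by (metis in_set_conv_nth)
  have nonneg: "ws i l \<ge> 0" if "i < length cs" for i l
    using is_w_nonneg[of d \<theta> win \<mu> "cs ! i" "ws i" l] qnode.IH that by blast
  have hyp_j: "\<forall>l. ws j l > 0 \<longrightarrow> (\<theta> \<le> lam l) \<noteq> win \<longrightarrow> e l \<ge> dval d \<theta> win \<mu> (Leaf l) - \<epsilon>"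
  proof (intro allI impI)
    fix l assume "ws j l > 0" "(\<theta> \<le> lam l) \<noteq> win"
    moreover have "(\<Sum>i<length cs. ws i l / D i) > 0"
      using j(1) pos nonneg \<open>ws j l > 0\<close> by (intro sum_pos2[where i=j]) (auto intro: divide_nonneg_pos)
    moreover have "(\<Sum>i<length cs. 1 / D i) > 0"
      using j(1) pos by (intro sum_pos2[where i=j]) (auto simp: less_imp_le)
    ultimately have "(\<Sum>i<length cs. ws i l / D i) / (\<Sum>i<length cs. 1 / D i) > 0"
      by simp
    then show "e l \<ge> dval d \<theta> win \<mu> (Leaf l) - \<epsilon>"
      using qnode.prems(7)[of l] \<open>(\<theta> \<le> lam l) \<noteq> win\<close> by (simp add: D_def)
  qed
  have "set (leaves (cs ! j)) \<subseteq> A"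
    using qnode.prems(4) j(1) by (auto dest!: nth_mem)
  then have "(\<Sum>l\<in>A. ws j l * e l) \<ge> D j - \<epsilon>"
    using qnode.IH j pos hyp_j qnode.prems(3,5,6) by (auto simp: D_def)
  then have "(\<Sum>i<length cs. (\<Sum>l\<in>A. ws i l * e l) / D i) / (\<Sum>i<length cs. 1 / D i)
      \<ge> 1 / (\<Sum>i<length cs. 1 / D i) - \<epsilon>"
    using j(1) pos nonneg qnode.prems(5,6)
    by (intro harmonic_mix_ge) (auto intro!: sum_nonneg mult_nonneg_nonneg)
  moreover have "(\<Sum>l\<in>A. (\<Sum>i<length cs. ws i l / D i) / (\<Sum>i<length cs. 1 / D i) * e l)
      = (\<Sum>i<length cs. (\<Sum>l\<in>A. ws i l * e l) / D i) / (\<Sum>i<length cs. 1 / D i)"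
    by (rule sum_mix_swap)
  ultimately show ?case
    using dval_nonPlab[OF qnode.hyps(1,2)] unfolding D_def by linarith
next
  case (zero L cs w)
  then show ?case
    by linarith
qed

section \<open>A strong law of large numbers for square-integrable variables\<close>

lemma filterlim_floor_sqrt_at_top: "filterlim floor_sqrt at_top sequentially"
  unfolding filterlim_at_top
proof
  fix Z :: nat
  show "eventually (\<lambda>n. Z \<le> floor_sqrt n) sequentially"
    using eventually_ge_at_top[of "Z\<^sup>2"] by (rule eventually_mono) (simp add: le_floor_sqrtI)
qed

lemma mono_average_between_squares:
  fixes S :: "nat \<Rightarrow> real"
  assumes mono: "mono S" and nonneg: "\<And>n. S n \<ge> 0" and "n \<ge> 1"
  defines "q \<equiv> floor_sqrt n"
  shows "S (q\<^sup>2) / real (q\<^sup>2) * (real q ^ 2 / (1 + real q)\<^sup>2) \<le> S n / real n"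
    and "S n / real n \<le> S ((Suc q)\<^sup>2) / real ((Suc q)\<^sup>2) * ((1 + real q) ^ 2 / (real q)\<^sup>2)"
proof -
  have q1: "q \<ge> 1"
    using \<open>n \<ge> 1\<close> by (simp add: q_def le_floor_sqrtI)
  have sq: "q\<^sup>2 \<le> n" "n \<le> (Suc q)\<^sup>2"
    unfolding q_def using Suc_floor_sqrt_power2_gt[of n] by auto
  have "real (q\<^sup>2) \<le> real n" "real n \<le> real ((Suc q)\<^sup>2)"
    using sq by (simp_all only: of_nat_le_iff)
  then have real_sq: "real q ^ 2 \<le> real n" "real n \<le> (1 + real q)\<^sup>2"
    by simp_all
  have "S (q\<^sup>2) / real (q\<^sup>2) * (real q ^ 2 / (1 + real q)\<^sup>2) = S (q\<^sup>2) / (1 + real q)\<^sup>2"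
    using q1 by simp
  also have "\<dots> \<le> S n / (1 + real q)\<^sup>2"
    using monoD[OF mono sq(1)] by (intro divide_right_mono) auto
  also have "\<dots> \<le> S n / real n"
    using real_sq(2) nonneg \<open>n \<ge> 1\<close> by (intro divide_left_mono) auto
  finally show "S (q\<^sup>2) / real (q\<^sup>2) * (real q ^ 2 / (1 + real q)\<^sup>2) \<le> S n / real n" .
  have "S n / real n \<le> S ((Suc q)\<^sup>2) / real n"
    using monoD[OF mono sq(2)] by (intro divide_right_mono) auto
  also have "\<dots> \<le> S ((Suc q)\<^sup>2) / (real q)\<^sup>2"
    using real_sq(1) nonneg q1 \<open>n \<ge> 1\<close> by (intro divide_left_mono) auto
  also have "\<dots> = S ((Suc q)\<^sup>2) / real ((Suc q)\<^sup>2) * ((1 + real q) ^ 2 / (real q)\<^sup>2)"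
    using q1 by simp
  finally show "S n / real n \<le> S ((Suc q)\<^sup>2) / real ((Suc q)\<^sup>2) * ((1 + real q) ^ 2 / (real q)\<^sup>2)" .
qed

text \<open>For nondecreasing partial sums, convergence of the averages along the squares
  extends to all \<open>n\<close>, because \<open>n\<close> lies between consecutive squares whose ratio tends to 1.\<close>

lemma LIMSEQ_mono_averages_from_squares:
  fixes S :: "nat \<Rightarrow> real"
  assumes mono: "mono S" and nonneg: "\<And>n. S n \<ge> 0"
    and lim: "(\<lambda>j. S ((Suc j)\<^sup>2) / real ((Suc j)\<^sup>2)) \<longlonglongrightarrow> m"
  shows "(\<lambda>n. S n / real n) \<longlonglongrightarrow> m"
proof -
  define b where "b j = S (j\<^sup>2) / real (j\<^sup>2)" for j
  define q where "q = floor_sqrt"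
  have b: "b \<longlonglongrightarrow> m"
    by (rule LIMSEQ_imp_Suc) (use lim in \<open>simp add: b_def\<close>)
  have q: "filterlim q at_top sequentially"
    unfolding q_def by (rule filterlim_floor_sqrt_at_top)
  have Suc_q: "filterlim (\<lambda>n. Suc (q n)) at_top sequentially"
    by (rule filterlim_compose[OF filterlim_Suc q])
  have r1: "(\<lambda>x::nat. real x ^ 2 / (1 + real x)\<^sup>2) \<longlonglongrightarrow> 1"
    and r2: "(\<lambda>x::nat. (1 + real x) ^ 2 / (real x)\<^sup>2) \<longlonglongrightarrow> 1"
    by real_asymp+
  have "(\<lambda>n. S n / real n) \<longlonglongrightarrow> m * 1"
  proof (rule tendsto_sandwich)
    show "(\<lambda>n. b (q n) * (real (q n) ^ 2 / (1 + real (q n))\<^sup>2)) \<longlonglongrightarrow> m * 1"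
      by (intro tendsto_mult filterlim_compose[OF b q] filterlim_compose[OF r1 q])
    show "(\<lambda>n. b (Suc (q n)) * ((1 + real (q n)) ^ 2 / (real (q n))\<^sup>2)) \<longlonglongrightarrow> m * 1"
      by (intro tendsto_mult filterlim_compose[OF b Suc_q] filterlim_compose[OF r2 q])
    show "eventually (\<lambda>n. b (q n) * (real (q n) ^ 2 / (1 + real (q n))\<^sup>2) \<le> S n / real n)
        sequentially"
      using eventually_ge_at_top[of 1] by (rule eventually_mono)
        (use mono_average_between_squares(1)[OF mono nonneg] in \<open>simp add: b_def q_def\<close>)
    show "eventually (\<lambda>n. S n / real n \<le> b (Suc (q n)) * ((1 + real (q n)) ^ 2 / (real (q n))\<^sup>2))
        sequentially"
      using eventually_ge_at_top[of 1] by (rule eventually_mono)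
        (use mono_average_between_squares(2)[OF mono nonneg] in \<open>simp add: b_def q_def\<close>)
  qed
  then show ?thesis
    by simp
qed

context prob_space
begin

lemma
  fixes Y :: "'i \<Rightarrow> 'a \<Rightarrow> real"
  assumes indep: "indep_vars (\<lambda>_. borel) Y K" and "finite K"
    and square_int: "\<And>k. k \<in> K \<Longrightarrow> integrable M (\<lambda>\<omega>. (Y k \<omega>)\<^sup>2)"
    and centered: "\<And>k. k \<in> K \<Longrightarrow> expectation (Y k) = 0"
  shows integrable_square_sum_indep: "integrable M (\<lambda>\<omega>. (\<Sum>k\<in>K. Y k \<omega>)\<^sup>2)"
    and expectation_square_sum_indep:
      "expectation (\<lambda>\<omega>. (\<Sum>k\<in>K. Y k \<omega>)\<^sup>2) = (\<Sum>k\<in>K. expectation (\<lambda>\<omega>. (Y k \<omega>)\<^sup>2))"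
proof -
  have rv[measurable]: "k \<in> K \<Longrightarrow> Y k \<in> borel_measurable M" for k
    using indep by (auto simp: indep_vars_def)
  have int: "k \<in> K \<Longrightarrow> integrable M (Y k)" for k
    using square_integrable_imp_integrable[OF rv square_int] .
  have cross: "integrable M (\<lambda>\<omega>. Y j \<omega> * Y k \<omega>) \<and>
      expectation (\<lambda>\<omega>. Y j \<omega> * Y k \<omega>) = (if j = k then expectation (\<lambda>\<omega>. (Y k \<omega>)\<^sup>2) else 0)"
    if "j \<in> K" "k \<in> K" for j k
  proof (cases "j = k")
    case False
    have indep2: "indep_vars (\<lambda>_. borel) Y {j, k}"
      using indep by (rule indep_vars_subset) (use that in auto)
    have "integrable M (\<lambda>\<omega>. \<Prod>i\<in>{j, k}. Y i \<omega>)"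
      using indep2 int that by (intro indep_vars_integrable) auto
    moreover have "expectation (\<lambda>\<omega>. \<Prod>i\<in>{j, k}. Y i \<omega>) = (\<Prod>i\<in>{j, k}. expectation (Y i))"
      using indep2 int that by (intro indep_vars_lebesgue_integral) auto
    ultimately show ?thesis
      using False centered that by simp
  qed (use square_int that in \<open>simp add: power2_eq_square\<close>)
  have square_sum: "(\<Sum>k\<in>K. Y k \<omega>)\<^sup>2 = (\<Sum>j\<in>K. \<Sum>k\<in>K. Y j \<omega> * Y k \<omega>)" for \<omega>
    by (simp add: power2_eq_square sum_product)
  show "integrable M (\<lambda>\<omega>. (\<Sum>k\<in>K. Y k \<omega>)\<^sup>2)"
    unfolding square_sum using cross by auto
  have "expectation (\<lambda>\<omega>. (\<Sum>k\<in>K. Y k \<omega>)\<^sup>2)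
      = (\<Sum>j\<in>K. \<Sum>k\<in>K. expectation (\<lambda>\<omega>. Y j \<omega> * Y k \<omega>))"
    unfolding square_sum using cross by (simp add: integral_sum)
  also have "\<dots> = (\<Sum>j\<in>K. \<Sum>k\<in>K. if k = j then expectation (\<lambda>\<omega>. (Y j \<omega>)\<^sup>2) else 0)"
    using cross by (intro sum.cong) auto
  also have "\<dots> = (\<Sum>k\<in>K. expectation (\<lambda>\<omega>. (Y k \<omega>)\<^sup>2))"
    using \<open>finite K\<close> by simp
  finally show "expectation (\<lambda>\<omega>. (\<Sum>k\<in>K. Y k \<omega>)\<^sup>2) = (\<Sum>k\<in>K. expectation (\<lambda>\<omega>. (Y k \<omega>)\<^sup>2))" .
qed

lemma sample_mean_deviation_prob_le:
  fixes X :: "nat \<Rightarrow> 'a \<Rightarrow> real" and F :: "real measure"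
  assumes indep: "indep_vars (\<lambda>_. borel) X UNIV" and distr: "\<And>k. distr M borel (X k) = F"
    and square_int: "integrable F (\<lambda>x. x\<^sup>2)" and "n > 0" "\<epsilon> > 0"
  shows "prob {\<omega>\<in>space M. \<epsilon> \<le> \<bar>(\<Sum>k<n. X k \<omega>) / real n - (\<integral>x. x \<partial>F)\<bar>}
    \<le> (\<integral>x. (x - (\<integral>x. x \<partial>F))\<^sup>2 \<partial>F) / (real n * \<epsilon>\<^sup>2)"
proof -
  define m where "m = (\<integral>x. x \<partial>F)"
  define Y where "Y k \<omega> = X k \<omega> - m" for k \<omega>
  have rv[measurable]: "X k \<in> borel_measurable M" for k
    using indep by (auto simp: indep_vars_def)
  have int2: "integrable M (\<lambda>\<omega>. (X k \<omega>)\<^sup>2)" for k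
    using square_int unfolding distr[of k, symmetric] by (subst (asm) integrable_distr_eq) auto
  have int1: "integrable M (X k)" for k
    using square_integrable_imp_integrable[OF rv int2] .
  have "indep_vars (\<lambda>_. borel) Y UNIV"
    unfolding Y_def using indep by (rule indep_vars_compose2[where X=X]) auto
  then have indepY: "indep_vars (\<lambda>_. borel) Y {..<n}"
    by (rule indep_vars_subset) simp
  have intY2: "integrable M (\<lambda>\<omega>. (Y k \<omega>)\<^sup>2)" for k
    unfolding Y_def power2_diff using int1[of k] int2[of k] by auto
  have "expectation (X k) = m" for k
    unfolding m_def distr[of k, symmetric] by (subst integral_distr) auto
  then have meanY: "expectation (Y k) = 0" for k
    unfolding Y_def using int1[of k] by (simp add: prob_space)
  have varY: "expectation (\<lambda>\<omega>. (Y k \<omega>)\<^sup>2) = (\<integral>x. (x - m)\<^sup>2 \<partial>F)" for k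
    unfolding Y_def distr[of k, symmetric] by (subst integral_distr) auto
  have sum_Y: "(\<Sum>k<n. Y k \<omega>) = (\<Sum>k<n. X k \<omega>) - m * real n" for \<omega>
    by (simp add: Y_def sum_subtractf)
  have "{\<omega>\<in>space M. \<epsilon> \<le> \<bar>(\<Sum>k<n. X k \<omega>) / real n - m\<bar>}
      = {\<omega>\<in>space M. real n * \<epsilon> \<le> \<bar>\<Sum>k<n. Y k \<omega>\<bar>}"
    using \<open>n > 0\<close> by (auto simp: sum_Y abs_div field_simps)
  also have "prob \<dots> \<le> expectation (\<lambda>\<omega>. (\<Sum>k<n. Y k \<omega>)\<^sup>2) / (real n * \<epsilon>)\<^sup>2"
    using assms(4,5) integrable_square_sum_indep[OF indepY _ intY2 meanY]
    by (intro second_moment_method) (auto simp: Y_def)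
  also have "\<dots> = real n * (\<integral>x. (x - m)\<^sup>2 \<partial>F) / (real n * \<epsilon>)\<^sup>2"
    using expectation_square_sum_indep[OF indepY _ intY2 meanY] by (simp add: varY)
  also have "\<dots> = (\<integral>x. (x - m)\<^sup>2 \<partial>F) / (real n * \<epsilon>\<^sup>2)"
    using assms(4) by (simp add: power2_eq_square)
  finally show ?thesis
    by (simp add: m_def)
qed

text \<open>Along the squares the Chebyshev bounds are summable, so Borel--Cantelli applies.\<close>

lemma AE_eventually_sample_mean_squares_close:
  fixes X :: "nat \<Rightarrow> 'a \<Rightarrow> real" and F :: "real measure"
  assumes indep: "indep_vars (\<lambda>_. borel) X UNIV" and distr: "\<And>k. distr M borel (X k) = F"
    and square_int: "integrable F (\<lambda>x. x\<^sup>2)" and "\<epsilon> > 0"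
  shows "AE \<omega> in M. eventually
    (\<lambda>j. \<bar>(\<Sum>k<(Suc j)\<^sup>2. X k \<omega>) / real ((Suc j)\<^sup>2) - (\<integral>x. x \<partial>F)\<bar> < \<epsilon>) sequentially"
proof -
  define v where "v = (\<integral>x. (x - (\<integral>x. x \<partial>F))\<^sup>2 \<partial>F)"
  define A where "A j = {\<omega>\<in>space M. \<epsilon> \<le> \<bar>(\<Sum>k<(Suc j)\<^sup>2. X k \<omega>) / real ((Suc j)\<^sup>2) - (\<integral>x. x \<partial>F)\<bar>}"
    for j
  have [measurable]: "X k \<in> borel_measurable M" for k
    using indep by (auto simp: indep_vars_def)
  have summable_bound: "summable (\<lambda>j. v / \<epsilon>\<^sup>2 * inverse (real (Suc j) ^ 2))"
  proof (rule summable_mult)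
    have "summable (\<lambda>j. inverse (real j ^ 2))"
      by (rule inverse_power_summable) simp
    then show "summable (\<lambda>j. inverse (real (Suc j) ^ 2))"
      by (subst summable_Suc_iff)
  qed
  have bound: "measure M (A j) \<le> v / \<epsilon>\<^sup>2 * inverse (real (Suc j) ^ 2)" for j
  proof -
    have "measure M (A j) \<le> v / (real ((Suc j)\<^sup>2) * \<epsilon>\<^sup>2)"
      using sample_mean_deviation_prob_le[OF indep distr square_int, of "(Suc j)\<^sup>2" \<epsilon>] \<open>\<epsilon> > 0\<close>
      unfolding A_def v_def by simp
    also have "\<dots> = v / \<epsilon>\<^sup>2 * inverse (real (Suc j) ^ 2)"
      by (simp add: field_simps)
    finally show ?thesis .
  qed
  have "summable (\<lambda>j. measure M (A j))"
    by (rule summable_comparison_test'[OF summable_bound, where N=0]) (use bound in auto)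
  then have "AE \<omega> in M. eventually (\<lambda>j. \<omega> \<in> space M - A j) sequentially"
    by (intro borel_cantelli_AE1) (auto simp: A_def emeasure_eq_measure)
  then show ?thesis
    by (rule AE_mp) (auto intro!: AE_I2 elim!: eventually_mono simp: A_def)
qed

lemma sample_mean_squares_LIMSEQ:
  fixes X :: "nat \<Rightarrow> 'a \<Rightarrow> real" and F :: "real measure"
  assumes indep: "indep_vars (\<lambda>_. borel) X UNIV" and distr: "\<And>k. distr M borel (X k) = F"
    and square_int: "integrable F (\<lambda>x. x\<^sup>2)"
  shows "AE \<omega> in M. (\<lambda>j. (\<Sum>k<(Suc j)\<^sup>2. X k \<omega>) / real ((Suc j)\<^sup>2)) \<longlonglongrightarrow> (\<integral>x. x \<partial>F)"
proof -
  have "AE \<omega> in M. \<forall>i. eventually (\<lambda>j. \<bar>(\<Sum>k<(Suc j)\<^sup>2. X k \<omega>) / real ((Suc j)\<^sup>2) - (\<integral>x. x \<partial>F)\<bar>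
      < 1 / real (Suc i)) sequentially"
    using AE_eventually_sample_mean_squares_close[OF indep distr square_int]
    by (subst AE_all_countable) auto
  then show ?thesis
  proof (rule AE_mp, intro AE_I2 impI)
    fix \<omega> assume close: "\<forall>i. eventually (\<lambda>j. \<bar>(\<Sum>k<(Suc j)\<^sup>2. X k \<omega>) / real ((Suc j)\<^sup>2) - (\<integral>x. x \<partial>F)\<bar>
      < 1 / real (Suc i)) sequentially"
    show "(\<lambda>j. (\<Sum>k<(Suc j)\<^sup>2. X k \<omega>) / real ((Suc j)\<^sup>2)) \<longlonglongrightarrow> (\<integral>x. x \<partial>F)"
    proof (rule tendstoI)
      fix r :: real assume "r > 0"
      then obtain i where i: "1 / real (Suc i) < r"
        using reals_Archimedean by (metis inverse_eq_divide of_nat_Suc)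
      show "eventually (\<lambda>j. dist ((\<Sum>k<(Suc j)\<^sup>2. X k \<omega>) / real ((Suc j)\<^sup>2)) (\<integral>x. x \<partial>F) < r) sequentially"
        using close[rule_format, of i] by (rule eventually_mono) (use i in \<open>simp add: dist_real_def\<close>)
    qed
  qed
qed

lemma strong_law_nonneg:
  fixes X :: "nat \<Rightarrow> 'a \<Rightarrow> real" and F :: "real measure"
  assumes indep: "indep_vars (\<lambda>_. borel) X UNIV" and distr: "\<And>k. distr M borel (X k) = F"
    and square_int: "integrable F (\<lambda>x. x\<^sup>2)" and nonneg: "\<And>k \<omega>. \<omega> \<in> space M \<Longrightarrow> X k \<omega> \<ge> 0"
  shows "AE \<omega> in M. (\<lambda>n. (\<Sum>k<n. X k \<omega>) / real n) \<longlonglongrightarrow> (\<integral>x. x \<partial>F)"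
  using sample_mean_squares_LIMSEQ[OF indep distr square_int]
proof (rule AE_mp, intro AE_I2 impI)
  fix \<omega> assume \<omega>: "\<omega> \<in> space M"
    and lim: "(\<lambda>j. (\<Sum>k<(Suc j)\<^sup>2. X k \<omega>) / real ((Suc j)\<^sup>2)) \<longlonglongrightarrow> (\<integral>x. x \<partial>F)"
  show "(\<lambda>n. (\<Sum>k<n. X k \<omega>) / real n) \<longlonglongrightarrow> (\<integral>x. x \<partial>F)"
  proof (rule LIMSEQ_mono_averages_from_squares[OF _ _ lim])
    show "mono (\<lambda>n. \<Sum>k<n. X k \<omega>)"
      by (rule monoI, rule sum_mono2) (use nonneg \<omega> in auto)
    show "0 \<le> (\<Sum>k<n. X k \<omega>)" for n
      using nonneg \<omega> by (simp add: sum_nonneg)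
  qed
qed

lemma strong_law_dominated_nonneg:
  fixes X :: "nat \<Rightarrow> 'a \<Rightarrow> real" and F :: "real measure" and g :: "real \<Rightarrow> real"
  assumes indep: "indep_vars (\<lambda>_. borel) X UNIV" and distr: "\<And>k. distr M borel (X k) = F"
    and square_int: "integrable F (\<lambda>x. x\<^sup>2)"
    and g: "g \<in> borel_measurable borel" "\<And>x. 0 \<le> g x" "\<And>x. g x \<le> \<bar>x\<bar>"
  shows "AE \<omega> in M. (\<lambda>n. (\<Sum>k<n. g (X k \<omega>)) / real n) \<longlonglongrightarrow> (\<integral>x. g x \<partial>F)"
proof -
  have rv[measurable]: "X k \<in> borel_measurable M" for k
    using indep by (auto simp: indep_vars_def)
  have sets_F: "sets F = sets borel"
    using distr[of 0] by (metis sets_distr)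
  have meas_F: "f \<in> borel_measurable F" if "f \<in> borel_measurable borel" for f :: "real \<Rightarrow> real"
    using that measurable_cong_sets[OF sets_F refl] by blast
  have "AE \<omega> in M. (\<lambda>n. (\<Sum>k<n. g (X k \<omega>)) / real n) \<longlonglongrightarrow> (\<integral>x. x \<partial>distr F borel g)"
  proof (rule strong_law_nonneg)
    show "indep_vars (\<lambda>_. borel) (\<lambda>k \<omega>. g (X k \<omega>)) UNIV"
      using indep g(1) by (rule indep_vars_compose2[where Y="\<lambda>_. g"])
    show "distr M borel (\<lambda>\<omega>. g (X k \<omega>)) = distr F borel g" for k
      using g(1) unfolding distr[of k, symmetric] by (subst distr_distr) (auto simp: comp_def)
    have "(g x)\<^sup>2 \<le> x\<^sup>2" for x
      using g(2,3)[of x] by (simp add: abs_le_square_iff[symmetric])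
    then have "integrable F (\<lambda>x. (g x)\<^sup>2)"
      using g(1) by (intro Bochner_Integration.integrable_bound[OF square_int] meas_F) auto
    then show "integrable (distr F borel g) (\<lambda>x. x\<^sup>2)"
      using g(1) by (subst integrable_distr_eq) (auto intro: meas_F)
  qed (use g in auto)
  then show ?thesis
    using g(1) by (subst (asm) integral_distr) (auto intro: meas_F)
qed

lemma strong_law_of_large_numbers:
  fixes X :: "nat \<Rightarrow> 'a \<Rightarrow> real" and F :: "real measure"
  assumes indep: "indep_vars (\<lambda>_. borel) X UNIV" and distr: "\<And>k. distr M borel (X k) = F"
    and square_int: "integrable F (\<lambda>x. x\<^sup>2)"
  shows "AE \<omega> in M. (\<lambda>n. (\<Sum>k<n. X k \<omega>) / real n) \<longlonglongrightarrow> (\<integral>x. x \<partial>F)"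
proof -
  have rv: "X 0 \<in> borel_measurable M"
    using indep by (auto simp: indep_vars_def)
  have meas_F: "f \<in> borel_measurable F" if "f \<in> borel_measurable borel" for f :: "real \<Rightarrow> real"
    using that measurable_cong_sets[of F borel] distr[of 0] by (metis sets_distr)
  interpret F: prob_space F
    using distr[of 0] prob_space_distr[OF rv] by simp
  have int: "integrable F (\<lambda>x. x)"
    by (rule F.square_integrable_imp_integrable[OF _ square_int]) (simp add: meas_F)
  note parts = strong_law_dominated_nonneg[OF indep distr square_int]
  have pos: "AE \<omega> in M. (\<lambda>n. (\<Sum>k<n. max (X k \<omega>) 0) / real n) \<longlonglongrightarrow> (\<integral>x. max x 0 \<partial>F)"
    by (rule parts) auto
  have neg: "AE \<omega> in M. (\<lambda>n. (\<Sum>k<n. max (- X k \<omega>) 0) / real n) \<longlonglongrightarrow> (\<integral>x. max (- x) 0 \<partial>F)"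
    by (rule parts[of "\<lambda>x. max (- x) 0"]) auto
  have int_parts: "integrable F (\<lambda>x. max x 0)" "integrable F (\<lambda>x. max (- x) 0)"
    using int by (auto intro!: Bochner_Integration.integrable_bound[OF int] meas_F AE_I2)
  have "(\<integral>x. x \<partial>F) = (\<integral>x. max x 0 - max (- x) 0 \<partial>F)"
    by (rule Bochner_Integration.integral_cong) (auto simp: max_def)
  also have "\<dots> = (\<integral>x. max x 0 \<partial>F) - (\<integral>x. max (- x) 0 \<partial>F)"
    using int_parts by simp
  finally have mean_eq: "(\<integral>x. max x 0 \<partial>F) - (\<integral>x. max (- x) 0 \<partial>F) = (\<integral>x. x \<partial>F)"
    by simp
  have avg_eq: "(\<Sum>k<n. max (X k \<omega>) 0) / real n - (\<Sum>k<n. max (- X k \<omega>) 0) / real n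
      = (\<Sum>k<n. X k \<omega>) / real n" for n \<omega>
  proof -
    have "(\<Sum>k<n. max (X k \<omega>) 0) - (\<Sum>k<n. max (- X k \<omega>) 0) = (\<Sum>k<n. X k \<omega>)"
      unfolding sum_subtractf[symmetric] by (intro sum.cong) (auto simp: max_def)
    then show ?thesis
      by (simp add: diff_divide_distrib[symmetric])
  qed
  from pos neg show ?thesis
  proof eventually_elim
    case (elim \<omega>)
    then show ?case
      using tendsto_diff[OF elim] by (simp only: mean_eq avg_eq)
  qed
qed

end

section \<open>Growth of the threshold\<close>

lemma ln_less_minus_one: "0 < (z::real) \<Longrightarrow> z \<noteq> 1 \<Longrightarrow> ln z < z - 1"
  using exp_minus_greater[of "- ln z"] by simp

lemma hfun_strict_mono:
  assumes "1 \<le> a" "a < b"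
  shows "hfun a < hfun b"
proof -
  have "ln (b / a) < b / a - 1"
    using assms by (intro ln_less_minus_one) auto
  also have "\<dots> = (b - a) / a"
    using assms by (simp add: field_simps)
  also have "\<dots> \<le> b - a"
    using assms by (simp add: divide_le_eq)
  finally show ?thesis
    using assms by (simp add: hfun_def ln_div)
qed

lemma
  assumes "y \<ge> 1"
  shows hinv_ge_1: "hinv y \<ge> 1" and hfun_hinv: "hfun (hinv y) = y"
proof -
  have "\<exists>x\<ge>1. x \<le> 2 * y \<and> hfun x = y"
  proof (rule IVT)
    show "y \<le> hfun (2 * y)"
      using ln_le_minus_one[of y] ln_2_less_1 assms by (simp add: hfun_def ln_mult)
    show "\<forall>x. 1 \<le> x \<and> x \<le> 2 * y \<longrightarrow> isCont hfun x"
      unfolding hfun_def[abs_def] by (auto intro!: continuous_intros)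
  qed (use assms in \<open>auto simp: hfun_def\<close>)
  then obtain x where x: "x \<ge> 1" "hfun x = y"
    by blast
  have "hinv y = x"
    unfolding hinv_def
  proof (rule the_equality)
    fix x' assume "1 \<le> x' \<and> hfun x' = y"
    then show "x' = x"
      using hfun_strict_mono[of x x'] hfun_strict_mono[of x' x] x
      by (cases x x' rule: linorder_cases) auto
  qed (use x in simp)
  then show "hinv y \<ge> 1" "hfun (hinv y) = y"
    using x by auto
qed

lemma hinv_le:
  assumes "y \<ge> 1"
  shows "hinv y \<le> y + ln (2 * y)"
proof -
  define u where "u = hinv y"
  have u: "u \<ge> 1" "u - ln u = y"
    using hinv_ge_1[OF assms] hfun_hinv[OF assms] by (auto simp: u_def hfun_def)
  have "ln u = 2 * ln (sqrt u)"
    using u by (simp add: ln_sqrt)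
  also have "\<dots> \<le> 2 * (sqrt u - 1)"
    using ln_le_minus_one[of "sqrt u"] u by simp
  also have "\<dots> \<le> u / 2"
    using zero_le_power2[of "sqrt u - 2"] u by (simp add: power2_eq_square algebra_simps)
  finally have "u \<le> 2 * y"
    using u by simp
  then have "ln u \<le> ln (2 * y)"
    using u by simp
  then show ?thesis
    using u by (simp add: u_def)
qed

lemma ln_three_halves_bounds: "1 / 3 \<le> ln (3 / 2 :: real)" "ln (3 / 2 :: real) \<le> 1"
  using ln_le_minus_one[of "2 / 3 :: real"] ln_le_minus_one[of "3 / 2 :: real"]
  by (simp_all add: ln_div)

lemma exp_le_one_plus_three:
  fixes a :: real
  assumes "0 \<le> a" "a \<le> 1"
  shows "exp a \<le> 1 + 3 * a"
proof -
  have "(1 - a) * exp a \<le> exp (- a) * exp a"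
    using exp_minus_ge[of a] assms by (intro mult_right_mono) auto
  then have "exp a - a * exp a \<le> 1"
    by (simp add: exp_minus field_simps)
  moreover have "exp a \<le> 3"
    using exp_le exp_mono[OF assms(2)] by linarith
  then have "a * exp a \<le> a * 3"
    using assms by (intro mult_left_mono) auto
  ultimately show ?thesis
    by linarith
qed

lemma htilde_le:
  assumes "z \<ge> 1 / 2"
  shows "htilde z \<le> z + ln (2 * z) + 11"
proof (cases "z \<ge> hfun (1 / ln (3 / 2))")
  case True
  have "hfun (1 / ln (3 / 2)) \<ge> 1"
    using ln_le_minus_one[of "1 / ln (3 / 2)"] ln_three_halves_bounds by (simp add: hfun_def)
  then have z: "z \<ge> 1"
    using True by simp
  define w where "w = hinv z"
  have w: "w \<ge> 1" "w \<le> z + ln (2 * z)"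
    using hinv_ge_1[OF z] hinv_le[OF z] by (auto simp: w_def)
  have "exp (1 / w) * w \<le> (1 + 3 * (1 / w)) * w"
    using w exp_le_one_plus_three[of "1 / w"] by (intro mult_right_mono) auto
  also have "\<dots> = w + 3"
    using w by (simp add: field_simps)
  finally show ?thesis
    using True w by (simp add: htilde_def w_def)
next
  case False
  define v :: real where "v = 1 / ln (3 / 2)"
  have v: "1 \<le> v" "v \<le> 3"
    using ln_three_halves_bounds by (simp_all add: v_def field_simps)
  then have "hfun v \<le> 3"
    using ln_ge_zero[OF v(1)] v(2) unfolding hfun_def by linarith
  then have "z \<le> 3"
    using False by (simp add: v_def)
  moreover have "- ln (ln (3 / 2 :: real)) \<le> 2"
    using ln_le_minus_one[of v] v ln_three_halves_bounds by (simp add: v_def ln_div)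
  moreover have "ln (2 * z) \<ge> 0"
    using assms by simp
  moreover have "htilde z = 3 / 2 * z - 3 / 2 * ln (ln (3 / 2))"
    using False by (simp add: htilde_def algebra_simps)
  ultimately show ?thesis
    using assms by linarith
qed

lemma Cexp_le:
  assumes "x \<ge> 0"
  shows "Cexp x \<le> 28 + x + ln (2 + 2 * x) + 2 * ln (6 + x + ln (2 + 2 * x))"
proof -
  define u where "u = hinv (1 + x)"
  define c where "c = ln (pi\<^sup>2 / 3)"
  have u: "u \<ge> 1" "u \<le> 1 + x + ln (2 + 2 * x)"
    using hinv_ge_1[of "1 + x"] hinv_le[of "1 + x"] assms by (auto simp: u_def algebra_simps)
  have "3 * 3 \<le> pi * pi" "pi * pi \<le> 4 * 4"
    using pi_gt3 pi_less_4 by (intro mult_mono; simp)+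
  then have c: "0 \<le> c" "c \<le> 5"
    using ln_le_minus_one[of "pi\<^sup>2 / 3"] by (auto simp: c_def power2_eq_square)
  define z where "z = (u + c) / 2"
  have z: "z \<ge> 1 / 2" "2 * z = u + c"
    using u c by (auto simp: z_def)
  have "ln (u + c) \<le> ln (6 + x + ln (2 + 2 * x))"
    using u c by simp
  have "Cexp x = 2 * htilde z"
    by (simp add: Cexp_def u_def c_def z_def)
  also have "\<dots> \<le> 2 * z + 2 * ln (2 * z) + 22"
    using htilde_le[OF z(1)] by simp
  also have "\<dots> \<le> 28 + x + ln (2 + 2 * x) + 2 * ln (6 + x + ln (2 + 2 * x))"
    unfolding z(2) using u c \<open>ln (u + c) \<le> ln (6 + x + ln (2 + 2 * x))\<close> by linarith
  finally show ?thesis .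
qed

lemma Cexp_le_linear: "\<epsilon> > 0 \<Longrightarrow> eventually (\<lambda>x. Cexp x \<le> (1 + \<epsilon>) * x) at_top"
proof -
  assume "\<epsilon> > 0"
  have "((\<lambda>x::real. (28 + ln (2 + 2 * x) + 2 * ln (6 + x + ln (2 + 2 * x))) / x) \<longlongrightarrow> 0) at_top"
    by real_asymp
  then have "eventually (\<lambda>x. (28 + ln (2 + 2 * x) + 2 * ln (6 + x + ln (2 + 2 * x))) / x < \<epsilon>) at_top"
    using \<open>\<epsilon> > 0\<close> by (rule order_tendstoD)
  with eventually_gt_at_top[of 0] show ?thesis
  proof eventually_elim
    case (elim x)
    then show ?case
      using Cexp_le[of x] by (simp add: field_simps)
  qed
qed

lemma threshold_le_linear:
  fixes K :: real
  assumes "K \<ge> 0" "\<epsilon> > 0"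
  shows "eventually (\<lambda>\<delta>. K * Cexp (ln (1 / \<delta>) / K) \<le> (1 + \<epsilon>) * ln (1 / \<delta>)) (at_right 0)"
proof (cases "K = 0")
  case True
  have "eventually (\<lambda>\<delta>::real. 0 < \<delta> \<and> \<delta> < 1) (at_right 0)"
    unfolding eventually_at_right_field by (intro exI[of _ 1]) auto
  then show ?thesis
    by (rule eventually_mono) (use True assms(2) in \<open>auto simp: ln_div intro!: mult_nonneg_nonpos\<close>)
next
  case False
  then have "K > 0"
    using assms(1) by simp
  have "filterlim (\<lambda>\<delta>. ln (1 / \<delta>) / K) at_top (at_right (0::real))"
    using \<open>K > 0\<close> by real_asymp
  then have "eventually (\<lambda>\<delta>. Cexp (ln (1 / \<delta>) / K) \<le> (1 + \<epsilon>) * (ln (1 / \<delta>) / K)) (at_right 0)"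
    using Cexp_le_linear[OF assms(2)] by (rule filterlim_iff[THEN iffD1, rule_format])
  then show ?thesis
    by (rule eventually_mono) (use \<open>K > 0\<close> in \<open>simp add: field_simps\<close>)
qed

section \<open>Linear growth of the GLR statistic\<close>

lemma filterlim_at_top_if_ratio_tendsto_pos:
  fixes f :: "nat \<Rightarrow> nat"
  assumes "(\<lambda>t. real (f t) / real t) \<longlonglongrightarrow> c" "c > 0"
  shows "filterlim f at_top sequentially"
proof -
  have "filterlim (\<lambda>t. real (f t) / real t * real t) at_top sequentially"
    using assms filterlim_real_sequentially by (rule filterlim_tendsto_pos_mult_at_top)
  moreover have "eventually (\<lambda>t. real (f t) / real t * real t = real (f t)) sequentially"
    using eventually_gt_at_top[of 0] by (rule eventually_mono) simp
  ultimately have "filterlim (\<lambda>t. real (f t)) at_top sequentially"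
    using filterlim_cong by fastforce
  then show ?thesis
    by (simp add: filterlim_sequentially_iff_filterlim_real)
qed

lemma muhat_tendsto:
  assumes "filterlim (\<lambda>t. Ncnt I l t \<omega>) at_top sequentially"
    and "(\<lambda>n. (\<Sum>k<n. Y l k \<omega>) / real n) \<longlonglongrightarrow> m"
  shows "(\<lambda>t. muhat I Y t \<omega> l) \<longlonglongrightarrow> m"
  using filterlim_compose[OF assms(2,1)] by (simp add: muhat_def)

lemma count_times_dext_ge:
  assumes ef: "exp_family \<rho> \<Theta>" and theta: "\<theta> \<in> mean_set \<rho> \<Theta>"
    and y: "y \<in> mean_set \<rho> \<Theta>" and z: "z \<in> mean_set \<rho> \<Theta>"
    and sides: "(\<theta> \<le> y) \<noteq> win" "(\<theta> \<le> x) = win"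
    and a: "0 \<le> a" "a \<le> real n"
  shows "ereal (a * max 0 (kl_tangent \<rho> \<Theta> (nat_param \<rho> \<Theta> z) \<theta> x)) \<le> ereal (real n) * dext \<rho> \<Theta> x y"
proof -
  have "(nat_param \<rho> \<Theta> \<theta> - nat_param \<rho> \<Theta> y) * (x - \<theta>) \<ge> 0"
  proof (cases win)
    case True
    then have "nat_param \<rho> \<Theta> y \<le> nat_param \<rho> \<Theta> \<theta>" "\<theta> \<le> x"
      using sides nat_param_mono[OF ef y theta] by auto
    then show ?thesis
      by simp
  next
    case False
    then have "nat_param \<rho> \<Theta> \<theta> \<le> nat_param \<rho> \<Theta> y" "x \<le> \<theta>"
      using sides nat_param_mono[OF ef theta y] by auto
    then show ?thesis
      by (simp add: mult_nonpos_nonpos)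
  qed
  then have "ereal (max 0 (kl_tangent \<rho> \<Theta> (nat_param \<rho> \<Theta> z) \<theta> x)) \<le> dext \<rho> \<Theta> x y"
    using dext_ge_threshold[OF ef theta y nat_param_in[OF ef z]] dext_nonneg[OF ef y]
    by (auto simp: max_def zero_ereal_def)
  then have "ereal a * ereal (max 0 (kl_tangent \<rho> \<Theta> (nat_param \<rho> \<Theta> z) \<theta> x))
      \<le> ereal (real n) * dext \<rho> \<Theta> x y"
    by (rule ereal_mult_mono[rotated 3]) (use a in \<open>simp_all flip: zero_ereal_def\<close>)
  then show ?thesis
    by (simp only: times_ereal.simps(1))
qed

definition well_estimated ::
    "real measure \<Rightarrow> real set \<Rightarrow> real \<Rightarrow> bool \<Rightarrow> real \<Rightarrow> real \<Rightarrow> real \<Rightarrow> real \<Rightarrow> nat \<Rightarrow> real \<Rightarrow> bool" where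
  "well_estimated \<rho> \<Theta> \<theta> win \<epsilon> m p t n x \<longleftrightarrow>
     (1 - \<epsilon>) * p * t \<le> real n \<and> (\<theta> \<le> x) = win \<and>
     dKL \<rho> \<Theta> m \<theta> - \<epsilon> \<le> kl_tangent \<rho> \<Theta> (nat_param \<rho> \<Theta> m) \<theta> x"

lemma glr_sum_ge:
  fixes N :: "'l \<Rightarrow> nat" and x lam :: "'l \<Rightarrow> real"
  assumes ef: "exp_family \<rho> \<Theta>" and theta: "\<theta> \<in> mean_set \<rho> \<Theta>"
    and mu: "\<forall>l\<in>set (leaves T). \<mu> l \<in> mean_set \<rho> \<Theta>"
    and weights: "is_w (dKL \<rho> \<Theta>) \<theta> win \<mu> T w" and pos: "dval (dKL \<rho> \<Theta>) \<theta> win \<mu> T > 0"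
    and \<epsilon>: "0 \<le> \<epsilon>" "\<epsilon> \<le> 1" and "t \<ge> 0"
    and good: "\<And>l. w l > 0 \<Longrightarrow> well_estimated \<rho> \<Theta> \<theta> win \<epsilon> (\<mu> l) (w l) t (N l) (x l)"
    and lam: "\<forall>l\<in>set (leaves T). lam l \<in> mean_set \<rho> \<Theta>" "(\<theta> \<le> Vval T lam) \<noteq> win"
  shows "ereal (t * ((1 - \<epsilon>) * (dval (dKL \<rho> \<Theta>) \<theta> win \<mu> T - \<epsilon>)))
    \<le> (\<Sum>l\<in>set (leaves T). ereal (real (N l)) * dext \<rho> \<Theta> (x l) (lam l))"
proof -
  define L where "L = set (leaves T)"
  define e where "e l = (if w l > 0 \<and> (\<theta> \<le> lam l) \<noteq> win
    then max 0 (kl_tangent \<rho> \<Theta> (nat_param \<rho> \<Theta> (\<mu> l)) \<theta> (x l)) else 0)" for l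
  have "(\<Sum>l\<in>L. w l * e l) \<ge> dval (dKL \<rho> \<Theta>) \<theta> win \<mu> T - \<epsilon>"
  proof (rule is_w_weighted_sum_ge[OF weights pos lam(2)])
    show "e l \<ge> dval (dKL \<rho> \<Theta>) \<theta> win \<mu> (Leaf l) - \<epsilon>" if "w l > 0" "(\<theta> \<le> lam l) \<noteq> win" for l
      using good[OF that(1)] is_w_pos_leaf[OF weights pos that(1)] that
      by (auto simp: e_def well_estimated_def split: if_splits)
  qed (use \<epsilon> in \<open>auto simp: L_def e_def\<close>)
  then have "(1 - \<epsilon>) * (dval (dKL \<rho> \<Theta>) \<theta> win \<mu> T - \<epsilon>) \<le> (1 - \<epsilon>) * (\<Sum>l\<in>L. w l * e l)"
    using \<epsilon> by (intro mult_left_mono) auto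
  then have "t * ((1 - \<epsilon>) * (dval (dKL \<rho> \<Theta>) \<theta> win \<mu> T - \<epsilon>)) \<le> t * ((1 - \<epsilon>) * (\<Sum>l\<in>L. w l * e l))"
    using \<open>t \<ge> 0\<close> by (rule mult_left_mono)
  also have "\<dots> = (\<Sum>l\<in>L. (1 - \<epsilon>) * w l * t * e l)"
    by (simp add: sum_distrib_left mult_ac)
  finally have "ereal (t * ((1 - \<epsilon>) * (dval (dKL \<rho> \<Theta>) \<theta> win \<mu> T - \<epsilon>)))
      \<le> (\<Sum>l\<in>L. ereal ((1 - \<epsilon>) * w l * t * e l))"
    by simp
  also have "\<dots> \<le> (\<Sum>l\<in>L. ereal (real (N l)) * dext \<rho> \<Theta> (x l) (lam l))"
  proof (rule sum_mono)
    fix l assume "l \<in> L"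
    show "ereal ((1 - \<epsilon>) * w l * t * e l) \<le> ereal (real (N l)) * dext \<rho> \<Theta> (x l) (lam l)"
    proof (cases "w l > 0 \<and> (\<theta> \<le> lam l) \<noteq> win")
      case True
      then show ?thesis
        using count_times_dext_ge[OF ef theta, of "lam l" "\<mu> l" win "x l" "(1 - \<epsilon>) * w l * t"]
          good[of l] lam(1) mu \<open>l \<in> L\<close> \<epsilon> \<open>t \<ge> 0\<close>
        by (auto simp: e_def L_def well_estimated_def)
    next
      case False
      then have "e l = 0"
        by (auto simp: e_def)
      moreover have "dext \<rho> \<Theta> (x l) (lam l) \<ge> 0"
        using dext_nonneg[OF ef] lam(1) \<open>l \<in> L\<close> by (simp add: L_def)
      ultimately show ?thesis
        by (simp add: ereal_zero_le_0_iff flip: zero_ereal_def)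
    qed
  qed
  finally show ?thesis
    by (simp add: L_def)
qed

lemma Zstat_ge:
  assumes ef: "exp_family \<rho> \<Theta>" and theta: "\<theta> \<in> mean_set \<rho> \<Theta>"
    and mu: "\<forall>l\<in>set (leaves T). \<mu> l \<in> mean_set \<rho> \<Theta>"
    and weights: "is_w (dKL \<rho> \<Theta>) \<theta> win \<mu> T w" and pos: "dval (dKL \<rho> \<Theta>) \<theta> win \<mu> T > 0"
    and \<epsilon>: "0 \<le> \<epsilon>" "\<epsilon> \<le> 1"
    and good: "\<And>l. w l > 0 \<Longrightarrow>
      well_estimated \<rho> \<Theta> \<theta> win \<epsilon> (\<mu> l) (w l) (real t) (Ncnt I l t \<omega>) (muhat I Y t \<omega> l)"
  shows "ereal (real t * ((1 - \<epsilon>) * (dval (dKL \<rho> \<Theta>) \<theta> win \<mu> T - \<epsilon>))) \<le> Zstat \<rho> \<Theta> \<theta> T I Y t \<omega>"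
proof -
  have answer: "aval T \<theta> (muhat I Y t \<omega>) = win"
  proof (rule ccontr)
    assume "aval T \<theta> (muhat I Y t \<omega>) \<noteq> win"
    then obtain l where "w l > 0" "(\<theta> \<le> muhat I Y t \<omega> l) \<noteq> win"
      using is_w_wrong_side[OF weights pos] by (auto simp: aval_def)
    then show False
      using good by (auto simp: well_estimated_def)
  qed
  show ?thesis
    unfolding Zstat_def
  proof (rule INF_greatest, clarify)
    fix lam assume "\<forall>l\<in>set (leaves T). lam l \<in> mean_set \<rho> \<Theta>"
      and "aval T \<theta> lam \<noteq> aval T \<theta> (muhat I Y t \<omega>)"
    with answer show "ereal (real t * ((1 - \<epsilon>) * (dval (dKL \<rho> \<Theta>) \<theta> win \<mu> T - \<epsilon>)))
        \<le> (\<Sum>l\<in>set (leaves T). ereal (real (Ncnt I l t \<omega>)) * dext \<rho> \<Theta> (muhat I Y t \<omega> l) (lam l))"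
      using good by (intro glr_sum_ge[OF ef theta mu weights pos \<epsilon>]) (auto simp: aval_def)
  qed
qed

lemma eventually_well_estimated:
  assumes ef: "exp_family \<rho> \<Theta>" and theta: "\<theta> \<in> mean_set \<rho> \<Theta>"
    and weights: "is_w (dKL \<rho> \<Theta>) \<theta> win \<mu> T w" and pos: "dval (dKL \<rho> \<Theta>) \<theta> win \<mu> T > 0"
    and l: "w l > 0" "\<mu> l \<in> mean_set \<rho> \<Theta>" and "\<epsilon> > 0"
    and freq: "(\<lambda>t. real (Ncnt I l t \<omega>) / real t) \<longlonglongrightarrow> w l"
    and mean: "(\<lambda>n. (\<Sum>k<n. Y l k \<omega>) / real n) \<longlonglongrightarrow> \<mu> l"
  shows "eventually (\<lambda>t. well_estimated \<rho> \<Theta> \<theta> win \<epsilon> (\<mu> l) (w l) (real t) (Ncnt I l t \<omega>) (muhat I Y t \<omega> l))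
    sequentially"
  unfolding well_estimated_def
proof (intro eventually_conj)
  have "dval (dKL \<rho> \<Theta>) \<theta> win \<mu> (Leaf l) > 0"
    using is_w_pos_leaf[OF weights pos l(1)] by blast
  then have side: "if win then \<theta> < \<mu> l else \<mu> l < \<theta>"
    using dKL_self[OF ef theta] by (cases "\<mu> l = \<theta>") (auto split: if_splits)
  have mh: "(\<lambda>t. muhat I Y t \<omega> l) \<longlonglongrightarrow> \<mu> l"
    using l freq mean by (intro muhat_tendsto filterlim_at_top_if_ratio_tendsto_pos)
  have "eventually (\<lambda>t. (1 - \<epsilon>) * w l < real (Ncnt I l t \<omega>) / real t) sequentially"
    using l freq \<open>\<epsilon> > 0\<close> by (intro order_tendstoD(1)) auto
  then show "eventually (\<lambda>t. (1 - \<epsilon>) * w l * real t \<le> real (Ncnt I l t \<omega>)) sequentially"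
    using eventually_gt_at_top[of 0] by eventually_elim (simp add: field_simps)
  show "eventually (\<lambda>t. (\<theta> \<le> muhat I Y t \<omega> l) = win) sequentially"
  proof (cases win)
    case True
    then show ?thesis
      using side order_tendstoD(1)[OF mh, of \<theta>] by (auto elim: eventually_mono)
  next
    case False
    then show ?thesis
      using side order_tendstoD(2)[OF mh, of \<theta>] by (auto elim: eventually_mono)
  qed
  have "(\<lambda>t. kl_tangent \<rho> \<Theta> (nat_param \<rho> \<Theta> (\<mu> l)) \<theta> (muhat I Y t \<omega> l)) \<longlonglongrightarrow> dKL \<rho> \<Theta> (\<mu> l) \<theta>"
    using tendsto_kl_tangent[OF mh] dKL_eq[OF ef l(2) theta] by simp
  then show "eventually (\<lambda>t. dKL \<rho> \<Theta> (\<mu> l) \<theta> - \<epsilon>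
      \<le> kl_tangent \<rho> \<Theta> (nat_param \<rho> \<Theta> (\<mu> l)) \<theta> (muhat I Y t \<omega> l)) sequentially"
    using \<open>\<epsilon> > 0\<close> by (auto dest: order_tendstoD(1)[where a="dKL \<rho> \<Theta> (\<mu> l) \<theta> - \<epsilon>"] elim!: eventually_mono)
qed

text \<open>For \<open>c < d\<close> the witness \<open>\<epsilon> = (d - c) / (1 + d)\<close> satisfies \<open>(1 - \<epsilon>) (d - \<epsilon>) = c + \<epsilon>\<^sup>2\<close>.\<close>

lemma Zstat_eventually_ge:
  assumes ef: "exp_family \<rho> \<Theta>" and theta: "\<theta> \<in> mean_set \<rho> \<Theta>"
    and mu: "\<forall>l\<in>set (leaves T). \<mu> l \<in> mean_set \<rho> \<Theta>"
    and weights: "is_w (dKL \<rho> \<Theta>) \<theta> win \<mu> T w" and pos: "dval (dKL \<rho> \<Theta>) \<theta> win \<mu> T > 0"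
    and freq: "\<forall>l\<in>set (leaves T). (\<lambda>t. real (Ncnt I l t \<omega>) / real t) \<longlonglongrightarrow> w l"
    and means: "\<forall>l\<in>set (leaves T). (\<lambda>n. (\<Sum>k<n. Y l k \<omega>) / real n) \<longlonglongrightarrow> \<mu> l"
    and c: "0 < c" "c < dval (dKL \<rho> \<Theta>) \<theta> win \<mu> T"
  shows "eventually (\<lambda>t. ereal (real t * c) \<le> Zstat \<rho> \<Theta> \<theta> T I Y t \<omega>) sequentially"
proof -
  define D where "D = dval (dKL \<rho> \<Theta>) \<theta> win \<mu> T"
  define \<epsilon> where "\<epsilon> = (D - c) / (1 + D)"
  define S where "S = {l \<in> set (leaves T). w l > 0}"
  have \<epsilon>: "0 < \<epsilon>" "\<epsilon> < 1"
    using c pos by (auto simp: \<epsilon>_def D_def field_simps)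
  have "\<epsilon> * (1 + D) = D - c"
    using pos by (simp add: \<epsilon>_def D_def)
  moreover have "(1 - \<epsilon>) * (D - \<epsilon>) = D - \<epsilon> * (1 + D) + \<epsilon>\<^sup>2"
    by (simp add: algebra_simps power2_eq_square)
  ultimately have c_le: "c \<le> (1 - \<epsilon>) * (D - \<epsilon>)"
    using zero_le_power2[of \<epsilon>] by linarith
  have "eventually (\<lambda>t. \<forall>l\<in>S.
      well_estimated \<rho> \<Theta> \<theta> win \<epsilon> (\<mu> l) (w l) (real t) (Ncnt I l t \<omega>) (muhat I Y t \<omega> l)) sequentially"
    using mu freq means \<epsilon>(1)
    by (intro eventually_ball_finite ballI eventually_well_estimated[OF ef theta weights pos])
      (auto simp: S_def)
  then show ?thesis
  proof (rule eventually_mono)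
    fix t
    assume "\<forall>l\<in>S. well_estimated \<rho> \<Theta> \<theta> win \<epsilon> (\<mu> l) (w l) (real t) (Ncnt I l t \<omega>) (muhat I Y t \<omega> l)"
    then have "ereal (real t * ((1 - \<epsilon>) * (D - \<epsilon>))) \<le> Zstat \<rho> \<Theta> \<theta> T I Y t \<omega>"
      unfolding D_def using \<epsilon> is_w_pos_leaf[OF weights pos]
      by (intro Zstat_ge[OF ef theta mu weights pos]) (auto simp: S_def)
    moreover have "ereal (real t * c) \<le> ereal (real t * ((1 - \<epsilon>) * (D - \<epsilon>)))"
      using c_le by (simp add: mult_left_mono)
    ultimately show "ereal (real t * c) \<le> Zstat \<rho> \<Theta> \<theta> T I Y t \<omega>"
      by (rule order.trans[rotated])
  qed
qed

section \<open>The stopping time\<close>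

definition first_crossing :: "(nat \<Rightarrow> ereal) \<Rightarrow> (nat \<Rightarrow> ereal) \<Rightarrow> enat" where
  "first_crossing Z b = (if \<exists>t. b t \<le> Z t then enat (LEAST t. b t \<le> Z t) else \<infinity>)"

lemma tau_eq_first_crossing:
  "tau \<rho> \<Theta> \<theta> T I Y \<delta> \<omega> =
    first_crossing (\<lambda>t. Zstat \<rho> \<Theta> \<theta> T I Y t \<omega>) (\<lambda>t. ereal (beta T I t \<delta> \<omega>))"
  by (simp add: tau_def first_crossing_def)

lemma first_crossing_le: "b t \<le> Z t \<Longrightarrow> first_crossing Z b \<le> enat t"
  unfolding first_crossing_def by (auto intro: Least_le)

text \<open>Linear growth of \<open>Z\<close> beats the \<open>ln ln t\<close> part of the threshold, so the crossing happens
  by time \<open>B(\<delta>) / a\<close> for any rate \<open>a < c\<close>, up to a constant independent of \<open>\<delta>\<close>.\<close>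

lemma first_crossing_le_linear:
  fixes Z :: "nat \<Rightarrow> ereal" and \<beta> :: "nat \<Rightarrow> 'd \<Rightarrow> real" and B :: "'d \<Rightarrow> real"
  assumes Z: "eventually (\<lambda>t. ereal (real t * c) \<le> Z t) sequentially"
    and \<beta>: "\<And>t \<delta>. t \<ge> 1 \<Longrightarrow> \<beta> t \<delta> \<le> A * ln (1 + ln (real t)) + B \<delta>" and "A \<ge> 0"
    and a: "0 < a" "a < c"
  shows "\<exists>T0. \<forall>\<delta>. first_crossing Z (\<lambda>t. ereal (\<beta> t \<delta>)) \<le> enat (max T0 (nat \<lceil>B \<delta> / a\<rceil>))"
proof -
  have "(\<lambda>t::nat. ln (1 + ln (real t)) / real t) \<longlonglongrightarrow> 0"
    by real_asymp
  then have "eventually (\<lambda>t. ln (1 + ln (real t)) / real t < (c - a) / (A + 1)) sequentially"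
    using a \<open>A \<ge> 0\<close> by (intro order_tendstoD(2)) auto
  with Z eventually_ge_at_top[of 1]
  have "eventually (\<lambda>t. ereal (real t * c) \<le> Z t \<and> t \<ge> 1 \<and>
      ln (1 + ln (real t)) / real t < (c - a) / (A + 1)) sequentially"
    by (intro eventually_conj)
  then obtain T0 where T0: "\<And>t. t \<ge> T0 \<Longrightarrow>
      ereal (real t * c) \<le> Z t \<and> t \<ge> 1 \<and> ln (1 + ln (real t)) / real t < (c - a) / (A + 1)"
    unfolding eventually_sequentially by blast
  have "first_crossing Z (\<lambda>t. ereal (\<beta> t \<delta>)) \<le> enat (max T0 (nat \<lceil>B \<delta> / a\<rceil>))" for \<delta>
  proof (rule first_crossing_le)
    define t where "t = max T0 (nat \<lceil>B \<delta> / a\<rceil>)"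
    have t: "ereal (real t * c) \<le> Z t" "t \<ge> 1" "ln (1 + ln (real t)) < (c - a) / (A + 1) * real t"
      using T0[of t] by (auto simp: t_def field_simps)
    have "ln (1 + ln (real t)) \<ge> 0"
      using t(2) by simp
    then have "A * ln (1 + ln (real t)) \<le> (A + 1) * ln (1 + ln (real t))"
      by (simp add: algebra_simps)
    also have "\<dots> \<le> (c - a) * real t"
      using t(3) \<open>A \<ge> 0\<close> by (simp add: field_simps)
    finally have "A * ln (1 + ln (real t)) \<le> (c - a) * real t" .
    moreover have "B \<delta> \<le> a * real t"
    proof -
      have "B \<delta> / a \<le> real t"
        using real_nat_ceiling_ge[of "B \<delta> / a"] by (simp add: t_def)
      then show ?thesis
        using a by (simp add: field_simps)
    qed
    ultimately have "\<beta> t \<delta> \<le> real t * c"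
      using \<beta>[OF t(2), of \<delta>] by (simp add: algebra_simps)
    then have "ereal (\<beta> t \<delta>) \<le> ereal (real t * c)"
      by simp
    with t(1) show "ereal (\<beta> (max T0 (nat \<lceil>B \<delta> / a\<rceil>)) \<delta>) \<le> Z (max T0 (nat \<lceil>B \<delta> / a\<rceil>))"
      unfolding t_def by (rule order.trans[rotated])
  qed
  then show ?thesis
    by blast
qed

lemma first_crossing_finite:
  fixes Z :: "nat \<Rightarrow> ereal" and \<beta> :: "nat \<Rightarrow> 'd \<Rightarrow> real" and B :: "'d \<Rightarrow> real"
  assumes Z: "eventually (\<lambda>t. ereal (real t * c) \<le> Z t) sequentially" "c > 0"
    and \<beta>: "\<And>t \<delta>. t \<ge> 1 \<Longrightarrow> \<beta> t \<delta> \<le> A * ln (1 + ln (real t)) + B \<delta>" and "A \<ge> 0"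
  shows "first_crossing Z (\<lambda>t. ereal (\<beta> t \<delta>)) < \<infinity>"
proof -
  have "\<exists>T0. \<forall>\<delta>. first_crossing Z (\<lambda>t. ereal (\<beta> t \<delta>)) \<le> enat (max T0 (nat \<lceil>B \<delta> / (c / 2)\<rceil>))"
    by (rule first_crossing_le_linear[where \<beta>=\<beta> and B=B, OF Z(1) \<beta> \<open>A \<ge> 0\<close>]) (use Z(2) in auto)
  then obtain T0 where "first_crossing Z (\<lambda>t. ereal (\<beta> t \<delta>)) \<le> enat (max T0 (nat \<lceil>B \<delta> / (c / 2)\<rceil>))"
    by blast
  then show ?thesis
    by (rule order.strict_trans1) simp
qed

text \<open>For \<open>r > 1 / D\<close> pick a rate \<open>a\<close> with \<open>1 / r < a < D\<close> and \<open>\<epsilon>\<close> with \<open>(1 + \<epsilon>) / a < r\<close>: then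
  \<open>\<tau> \<le> T\<^sub>0 + 1 + (1 + \<epsilon>) ln(1/\<delta>) / a \<le> r ln(1/\<delta>)\<close> for small \<open>\<delta>\<close>.\<close>

lemma eventually_first_crossing_ratio_le:
  fixes Z :: "nat \<Rightarrow> ereal" and \<beta> :: "nat \<Rightarrow> real \<Rightarrow> real" and B :: "real \<Rightarrow> real"
  assumes Z: "\<And>c. 0 < c \<Longrightarrow> c < D \<Longrightarrow> eventually (\<lambda>t. ereal (real t * c) \<le> Z t) sequentially"
    and "D > 0"
    and \<beta>: "\<And>t \<delta>. t \<ge> 1 \<Longrightarrow> \<beta> t \<delta> \<le> A * ln (1 + ln (real t)) + B \<delta>" and "A \<ge> 0"
    and B: "\<And>\<epsilon>. \<epsilon> > 0 \<Longrightarrow> eventually (\<lambda>\<delta>. B \<delta> \<le> (1 + \<epsilon>) * ln (1 / \<delta>)) (at_right 0)"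
    and "r > 1 / D"
  shows "eventually (\<lambda>\<delta>. ereal_of_enat (first_crossing Z (\<lambda>t. ereal (\<beta> t \<delta>))) / ereal (ln (1 / \<delta>))
    \<le> ereal r) (at_right 0)"
proof -
  define a where "a = (1 / r + D) / 2"
  define \<epsilon> where "\<epsilon> = (r * a - 1) / 2"
  have "1 < D * r"
    using mult_strict_left_mono[OF \<open>r > 1 / D\<close> \<open>D > 0\<close>] \<open>D > 0\<close> by simp
  moreover have "r > 0"
    using \<open>r > 1 / D\<close> divide_pos_pos[OF zero_less_one \<open>D > 0\<close>] by linarith
  ultimately have r: "r > 0" "1 / r < D"
    by (simp_all add: divide_less_eq mult.commute)
  then have a: "0 < a" "a < D" "1 < r * a"
    by (auto simp: a_def field_simps)
  then have \<epsilon>: "\<epsilon> > 0" "(1 + \<epsilon>) / a < r"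
    by (auto simp: \<epsilon>_def field_simps)
  have "\<exists>T0. \<forall>\<delta>. first_crossing Z (\<lambda>t. ereal (\<beta> t \<delta>)) \<le> enat (max T0 (nat \<lceil>B \<delta> / a\<rceil>))"
    by (rule first_crossing_le_linear[where \<beta>=\<beta> and B=B, OF Z[of "(a + D) / 2"] \<beta> \<open>A \<ge> 0\<close>])
      (use a in auto)
  then obtain T0 where T0: "\<forall>\<delta>. first_crossing Z (\<lambda>t. ereal (\<beta> t \<delta>)) \<le> enat (max T0 (nat \<lceil>B \<delta> / a\<rceil>))"
    by blast
  have "filterlim (\<lambda>\<delta>. ln (1 / \<delta>)) at_top (at_right (0::real))"
    by real_asymp
  then have "eventually (\<lambda>\<delta>. max 1 ((real T0 + 1) / (r - (1 + \<epsilon>) / a)) \<le> ln (1 / \<delta>)) (at_right 0)"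
    by (rule filterlim_at_top[THEN iffD1, rule_format])
  with B[OF \<epsilon>(1)] show ?thesis
  proof eventually_elim
    case (elim \<delta>)
    define L where "L = ln (1 / \<delta>)"
    have L: "L > 0" "B \<delta> / a \<le> (1 + \<epsilon>) / a * L" "real T0 + 1 \<le> (r - (1 + \<epsilon>) / a) * L"
      using elim \<epsilon> a(1) by (auto simp: L_def field_simps)
    obtain k where k: "first_crossing Z (\<lambda>t. ereal (\<beta> t \<delta>)) = enat k" "k \<le> max T0 (nat \<lceil>B \<delta> / a\<rceil>)"
      using T0[rule_format, of \<delta>] by (cases "first_crossing Z (\<lambda>t. ereal (\<beta> t \<delta>))") auto
    have "(1 + \<epsilon>) / a * L \<ge> 0"
      using L(1) \<epsilon>(1) a(1) by simp
    moreover have "real (nat \<lceil>B \<delta> / a\<rceil>) \<le> max 0 (B \<delta> / a) + 1"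
      by linarith
    ultimately have "real k \<le> real T0 + 1 + (1 + \<epsilon>) / a * L"
      using k(2) L(2) by linarith
    also have "\<dots> \<le> r * L"
      using L(3) by (simp add: algebra_simps)
    finally show ?case
      using k(1) L(1) by (simp add: L_def[symmetric] field_simps)
  qed
qed

lemma Limsup_first_crossing_le:
  fixes Z :: "nat \<Rightarrow> ereal" and \<beta> :: "nat \<Rightarrow> real \<Rightarrow> real" and B :: "real \<Rightarrow> real"
  assumes Z: "\<And>c. 0 < c \<Longrightarrow> c < D \<Longrightarrow> eventually (\<lambda>t. ereal (real t * c) \<le> Z t) sequentially"
    and "D > 0"
    and \<beta>: "\<And>t \<delta>. t \<ge> 1 \<Longrightarrow> \<beta> t \<delta> \<le> A * ln (1 + ln (real t)) + B \<delta>" and "A \<ge> 0"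
    and B: "\<And>\<epsilon>. \<epsilon> > 0 \<Longrightarrow> eventually (\<lambda>\<delta>. B \<delta> \<le> (1 + \<epsilon>) * ln (1 / \<delta>)) (at_right 0)"
  shows "Limsup (at_right 0) (\<lambda>\<delta>. ereal_of_enat (first_crossing Z (\<lambda>t. ereal (\<beta> t \<delta>))) / ereal (ln (1 / \<delta>)))
    \<le> ereal (1 / D)"
proof (rule ereal_le_epsilon2)
  fix e :: real assume "e > 0"
  then have "Limsup (at_right 0) (\<lambda>\<delta>. ereal_of_enat (first_crossing Z (\<lambda>t. ereal (\<beta> t \<delta>))) / ereal (ln (1 / \<delta>)))
      \<le> ereal (1 / D + e)"
    by (intro Limsup_bounded eventually_first_crossing_ratio_le[OF Z \<open>D > 0\<close> \<beta> \<open>A \<ge> 0\<close> B]) auto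
  then show "Limsup (at_right 0) (\<lambda>\<delta>. ereal_of_enat (first_crossing Z (\<lambda>t. ereal (\<beta> t \<delta>))) / ereal (ln (1 / \<delta>)))
      \<le> ereal (1 / D) + ereal e"
    by simp
qed

lemma Ncnt_le: "Ncnt I l t \<omega> \<le> t"
proof -
  have "Ncnt I l t \<omega> \<le> card {1..t}"
    unfolding Ncnt_def by (intro card_mono) auto
  then show ?thesis
    by simp
qed

lemma beta_le:
  assumes "t \<ge> 1"
  shows "beta T I t \<delta> \<omega> \<le> 3 * real (card (set (leaves T))) * ln (1 + ln (real t))
    + real (card (set (leaves T))) * Cexp (ln (1 / \<delta>) / real (card (set (leaves T))))"
proof -
  have "ln (1 + ln (real (Ncnt I l t \<omega>))) \<le> ln (1 + ln (real t))" for l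
  proof (cases "Ncnt I l t \<omega> = 0")
    case False
    then have "ln (real (Ncnt I l t \<omega>)) \<le> ln (real t)" "ln (real (Ncnt I l t \<omega>)) \<ge> 0"
      using Ncnt_le[of I l t \<omega>] by auto
    then show ?thesis
      by simp
  qed (use assms in simp)
  then have "(\<Sum>l\<in>set (leaves T). ln (1 + ln (real (Ncnt I l t \<omega>))))
      \<le> (\<Sum>l\<in>set (leaves T). ln (1 + ln (real t)))"
    by (intro sum_mono)
  then show ?thesis
    by (simp add: beta_def)
qed

section \<open>Almost sure behaviour of the sample paths\<close>

lemma (in prob_space) indep_vars_reindex:
  assumes "indep_vars M' X (f ` I)" "inj_on f I"
  shows "indep_vars (\<lambda>i. M' (f i)) (\<lambda>i. X (f i)) I"
proof -
  have "indep_sets (\<lambda>i. {X (f i) -` A \<inter> space M |A. A \<in> sets (M' (f i))}) I"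
  proof (rule indep_setsI)
    fix A J assume J: "J \<noteq> {}" "J \<subseteq> I" "finite J" "\<forall>j\<in>J. A j \<in> {X (f j) -` A \<inter> space M |A. A \<in> sets (M' (f j))}"
    have inj: "inj_on f J"
      using assms(2) J(2) inj_on_subset by blast
    define A' where "A' x = A (the_inv_into J f x)" for x
    have A': "A' (f j) = A j" if "j \<in> J" for j
      using the_inv_into_f_f[OF inj that] by (simp add: A'_def)
    have "prob (\<Inter>x\<in>f ` J. A' x) = (\<Prod>x\<in>f ` J. prob (A' x))"
      using assms(1) J A' unfolding indep_vars_def2 by (intro indep_setsD) auto
    then show "prob (\<Inter>j\<in>J. A j) = (\<Prod>j\<in>J. prob (A j))"
      using A' by (simp add: prod.reindex[OF inj])
  qed (use assms(1) in \<open>auto simp: indep_vars_def2 indep_sets_def\<close>)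
  then show ?thesis
    using assms(1) unfolding indep_vars_def2 by auto
qed

lemma (in prob_space) AE_leaf_sample_means:
  fixes Y :: "'l \<Rightarrow> nat \<Rightarrow> 'a \<Rightarrow> real" and U :: "'a \<Rightarrow> real"
  assumes ef: "exp_family \<rho> \<Theta>" and "finite L"
    and indep: "indep_vars (\<lambda>_. borel) (\<lambda>i. case i of None \<Rightarrow> U | Some (l, k) \<Rightarrow> Y l k)
      (insert None (Some ` (L \<times> UNIV)))"
    and distr: "\<forall>l\<in>L. \<forall>k. distr M borel (Y l k) = fam \<rho> \<Theta> (\<mu> l)"
    and mu: "\<forall>l\<in>L. \<mu> l \<in> mean_set \<rho> \<Theta>"
  shows "AE \<omega> in M. \<forall>l\<in>L. (\<lambda>n. (\<Sum>k<n. Y l k \<omega>) / real n) \<longlonglongrightarrow> \<mu> l"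
proof -
  have "AE \<omega> in M. (\<lambda>n. (\<Sum>k<n. Y l k \<omega>) / real n) \<longlonglongrightarrow> \<mu> l" if "l \<in> L" for l
  proof -
    have "indep_vars (\<lambda>_. borel) (\<lambda>i. case i of None \<Rightarrow> U | Some (l, k) \<Rightarrow> Y l k) ((\<lambda>k. Some (l, k)) ` UNIV)"
      using indep by (rule indep_vars_subset) (use that in auto)
    then have "indep_vars (\<lambda>_. borel)
        (\<lambda>k. (\<lambda>i. case i of None \<Rightarrow> U | Some (l, k) \<Rightarrow> Y l k) (Some (l, k))) UNIV"
      by (rule indep_vars_reindex) (simp add: inj_on_def)
    then have "indep_vars (\<lambda>_. borel) (Y l) UNIV"
      by simp
    then show ?thesis
      using strong_law_of_large_numbers[of "Y l" "fam \<rho> \<Theta> (\<mu> l)"] distr mu that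
        integrable_square_fam[OF ef] mean_fam[OF ef] by simp
  qed
  then show ?thesis
    using \<open>finite L\<close> by (subst AE_ball_countable) (auto intro: countable_finite)
qed

lemma tau_asymptotics_pathwise:
  assumes ef: "exp_family \<rho> \<Theta>" and theta: "\<theta> \<in> mean_set \<rho> \<Theta>"
    and mu: "\<forall>l\<in>set (leaves T). \<mu> l \<in> mean_set \<rho> \<Theta>"
    and weights: "is_w (dKL \<rho> \<Theta>) \<theta> win \<mu> T w" and pos: "dval (dKL \<rho> \<Theta>) \<theta> win \<mu> T > 0"
    and means: "\<forall>l\<in>set (leaves T). (\<lambda>n. (\<Sum>k<n. Y l k \<omega>) / real n) \<longlonglongrightarrow> \<mu> l"
    and freq: "\<forall>l\<in>set (leaves T). (\<lambda>t. real (Ncnt I l t \<omega>) / real t) \<longlonglongrightarrow> w l"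
  shows "(\<forall>\<delta>. tau \<rho> \<Theta> \<theta> T I Y \<delta> \<omega> < \<infinity>) \<and>
    Limsup (at_right 0) (\<lambda>\<delta>. ereal_of_enat (tau \<rho> \<Theta> \<theta> T I Y \<delta> \<omega>) / ereal (ln (1 / \<delta>)))
      \<le> ereal (1 / dval (dKL \<rho> \<Theta>) \<theta> win \<mu> T)"
proof -
  define D where "D = dval (dKL \<rho> \<Theta>) \<theta> win \<mu> T"
  define K where "K = real (card (set (leaves T)))"
  have Z: "eventually (\<lambda>t. ereal (real t * c) \<le> Zstat \<rho> \<Theta> \<theta> T I Y t \<omega>) sequentially"
    if "0 < c" "c < D" for c
    using Zstat_eventually_ge[OF ef theta mu weights pos] freq means that by (simp add: D_def)
  have \<beta>: "beta T I t \<delta> \<omega> \<le> 3 * K * ln (1 + ln (real t)) + K * Cexp (ln (1 / \<delta>) / K)"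
    if "t \<ge> 1" for t \<delta>
    using beta_le[OF that] by (simp add: K_def)
  have "D > 0"
    using pos by (simp add: D_def)
  then show ?thesis
    unfolding tau_eq_first_crossing D_def[symmetric]
    using first_crossing_finite[OF Z[of "D / 2"] _ \<beta>]
      Limsup_first_crossing_le[OF Z \<open>D > 0\<close> \<beta> _ threshold_le_linear]
    by (auto simp: K_def)
qed

theorem theorem4:
  fixes \<rho> :: "real measure" and \<Theta> :: "real set" and \<theta> :: real
    and T :: "'l mmtree" and \<mu> :: "'l \<Rightarrow> real" and w :: "'l \<Rightarrow> real"
    and M :: "'w measure" and Y :: "'l \<Rightarrow> nat \<Rightarrow> 'w \<Rightarrow> real" and U :: "'w \<Rightarrow> real"
    and I :: "nat \<Rightarrow> 'w \<Rightarrow> 'l"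
  assumes fam: "exp_family \<rho> \<Theta>"
    and theta: "\<theta> \<in> mean_set \<rho> \<Theta>"
    and tree: "wf_tree T" "distinct (leaves T)"
    and mu: "\<forall>l\<in>set (leaves T). \<mu> l \<in> mean_set \<rho> \<Theta>"
    and Vne: "Vval T \<mu> \<noteq> \<theta>"
    and weights: "is_w (dKL \<rho> \<Theta>) \<theta> (aval T \<theta> \<mu>) \<mu> T w"
    and P: "prob_space M"
    and indep: "prob_space.indep_vars M (\<lambda>_. borel)
                  (\<lambda>i. case i of None \<Rightarrow> U | Some (l, k) \<Rightarrow> Y l k)
                  (insert None (Some ` (set (leaves T) \<times> UNIV)))"
    and distr: "\<forall>l\<in>set (leaves T). \<forall>k. distr M borel (Y l k) = fam \<rho> \<Theta> (\<mu> l)"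
    and I_leaf: "\<forall>t. \<forall>\<omega>\<in>space M. I t \<omega> \<in> set (leaves T)"
    and I_meas: "\<forall>t. I t \<in> measurable M (count_space UNIV)"
    and I_pred: "\<exists>f. \<forall>t\<ge>1. \<forall>\<omega>\<in>space M.
                   I t \<omega> = f t (U \<omega>) (map (\<lambda>s. (I s \<omega>, obs I Y s \<omega>)) [1..<t])"
    and conv: "AE \<omega> in M. \<forall>l\<in>set (leaves T).
                 (\<lambda>t. real (Ncnt I l t \<omega>) / real t) \<longlonglongrightarrow> w l"
  shows "(\<forall>\<delta>\<in>{0<..<1}. AE \<omega> in M. tau \<rho> \<Theta> \<theta> T I Y \<delta> \<omega> < \<infinity>) \<and>
         (AE \<omega> in M. Limsup (at_right 0)
             (\<lambda>\<delta>. ereal_of_enat (tau \<rho> \<Theta> \<theta> T I Y \<delta> \<omega>) / ereal (ln (1 / \<delta>)))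
           \<le> ereal (1 / dval (dKL \<rho> \<Theta>) \<theta> (aval T \<theta> \<mu>) \<mu> T))"
proof -
  interpret prob_space M
    by (rule P)
  have pos: "dval (dKL \<rho> \<Theta>) \<theta> (aval T \<theta> \<mu>) \<mu> T > 0"
  proof (rule dval_pos[OF tree(1)])
    show "\<forall>l\<in>set (leaves T). \<mu> l \<noteq> \<theta> \<longrightarrow> dKL \<rho> \<Theta> (\<mu> l) \<theta> > 0"
      using dKL_pos[OF fam _ theta] mu by auto
    show "if aval T \<theta> \<mu> then \<theta> < Vval T \<mu> else Vval T \<mu> < \<theta>"
      using Vne by (auto simp: aval_def)
  qed
  have "AE \<omega> in M. (\<forall>\<delta>. tau \<rho> \<Theta> \<theta> T I Y \<delta> \<omega> < \<infinity>) \<and>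
      Limsup (at_right 0) (\<lambda>\<delta>. ereal_of_enat (tau \<rho> \<Theta> \<theta> T I Y \<delta> \<omega>) / ereal (ln (1 / \<delta>)))
        \<le> ereal (1 / dval (dKL \<rho> \<Theta>) \<theta> (aval T \<theta> \<mu>) \<mu> T)"
    using AE_leaf_sample_means[OF fam finite_set indep distr mu] conv
    by eventually_elim (rule tau_asymptotics_pathwise[OF fam theta mu weights pos])
  then show ?thesis
    by (auto elim: eventually_mono)
qed

end
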